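(* Consider a $K$-receiver memoryless packet-erasure broadcast channel with packet size $F$, erasure probabilities $\delta_1,\dots,\delta_K\in[0,1)$, and receiver cache sizes $M_1,\dots,M_K\ge0$, as described in the context. Then \[ C(M_1,\dots,M_K)\le\min_{\emptyset\ne\mathcal S\subseteq\{1,\dots,K\}}\left(F\Big(\sum_{k\in\mathcal S}\frac{1}{1-\delta_k}\Big)^{-1}+\frac{M_{\mathcal S}}{D}\right), \] where $M_{\mathcal S}=\sum_{k\in\mathcal S}M_k$.
   Context: The channel has input alphabet $\{0,1\}^F$ ($F$ a positive integer); given input $x$, receiver $k$ observes $Y_k=x$ with probability $1-\delta_k$ and an erasure symbol $\Delta$ with probability $\delta_k$, memorylessly over time. Library: $D\ge K$ independent messages $W_1,\dots,W_D$, each uniform on $\{1,\dots,\lfloor2^{nR}\rfloor\}$. Caching phase (demands unknown): receiver $k$ stores $V_k=g_k(W_1,\dots,W_D)\in\{1,\dots,\lfloor2^{nM_k}\rfloor\}$. Delivery: an arbitrary demand vector $\mathbf d\in\{1,\dots,D\}^K$ is known to all; the transmitter sends $X^n=f_{\mathbf d}(W_1,\dots,W_D)$; receiver $k$ outputs $\hat W_k=\varphi_{k,\mathbf d}(Y_k^n,V_k)$ as an estimate of $W_{d_k}$. $(R,M_1,\dots,M_K)$ is achievable if for every $\epsilon>0$ there exist $n$ and such functions with worst-case (over all $\mathbf d$) probability that some receiver errs $<\epsilon$; $C(M_1,\dots,M_K)$ is the supremum of such $R$. *)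

theory Defs
  imports Complex_Main "HOL-Library.FuncSet"
begin

(* Receivers are indexed 1..K, files 1..D, time slots 0..<n.
   A channel input symbol in {0,1}^F is a bool list of length F;
   a channel output is an option: None = erasure symbol, Some x = x. *)

definition msg_count :: "nat \<Rightarrow> real \<Rightarrow> nat" where
  "msg_count n R = nat \<lfloor>2 powr (real n * R)\<rfloor>"

definition library :: "nat \<Rightarrow> nat \<Rightarrow> real \<Rightarrow> (nat \<Rightarrow> nat) set" where
  "library D n R = PiE {1..D} (\<lambda>_. {1..msg_count n R})"

definition demands :: "nat \<Rightarrow> nat \<Rightarrow> (nat \<Rightarrow> nat) set" where
  "demands K D = PiE {1..K} (\<lambda>_. {1..D})"

(* erasure patterns: e (t,k) = True iff receiver k sees an erasure at time t *)
definition erasure_patterns :: "nat \<Rightarrow> nat \<Rightarrow> (nat \<times> nat \<Rightarrow> bool) set" where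
  "erasure_patterns K n = PiE ({..<n} \<times> {1..K}) (\<lambda>_. UNIV)"

definition pattern_prob :: "(nat \<Rightarrow> real) \<Rightarrow> nat \<Rightarrow> nat \<Rightarrow> (nat \<times> nat \<Rightarrow> bool) \<Rightarrow> real" where
  "pattern_prob \<delta> K n e =
     (\<Prod>p\<in>{..<n} \<times> {1..K}. if e p then \<delta> (snd p) else 1 - \<delta> (snd p))"

definition channel_output ::
  "nat \<Rightarrow> (nat \<Rightarrow> bool list) \<Rightarrow> (nat \<times> nat \<Rightarrow> bool) \<Rightarrow> nat \<Rightarrow> (nat \<Rightarrow> bool list option)" where
  "channel_output n x e k = (\<lambda>t. if t < n \<and> \<not> e (t, k) then Some (x t) else None)"

(* g k w : cache content V_k; f d w : transmitted sequence X^n;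
   phi k d y v : estimate of receiver k of W_{d_k} *)
definition valid_code ::
  "nat \<Rightarrow> nat \<Rightarrow> nat \<Rightarrow> (nat \<Rightarrow> real) \<Rightarrow> nat \<Rightarrow> real
   \<Rightarrow> (nat \<Rightarrow> (nat \<Rightarrow> nat) \<Rightarrow> nat)
   \<Rightarrow> ((nat \<Rightarrow> nat) \<Rightarrow> (nat \<Rightarrow> nat) \<Rightarrow> nat \<Rightarrow> bool list) \<Rightarrow> bool" where
  "valid_code F K D M n R g f \<longleftrightarrow>
     (\<forall>k\<in>{1..K}. \<forall>w\<in>library D n R. g k w \<in> {1..nat \<lfloor>2 powr (real n * M k)\<rfloor>}) \<and>
     (\<forall>d\<in>demands K D. \<forall>w\<in>library D n R. \<forall>t<n. length (f d w t) = F)"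

definition error_prob ::
  "(nat \<Rightarrow> real) \<Rightarrow> nat \<Rightarrow> nat \<Rightarrow> nat \<Rightarrow> real
   \<Rightarrow> (nat \<Rightarrow> (nat \<Rightarrow> nat) \<Rightarrow> nat)
   \<Rightarrow> ((nat \<Rightarrow> nat) \<Rightarrow> (nat \<Rightarrow> nat) \<Rightarrow> nat \<Rightarrow> bool list)
   \<Rightarrow> (nat \<Rightarrow> (nat \<Rightarrow> nat) \<Rightarrow> (nat \<Rightarrow> bool list option) \<Rightarrow> nat \<Rightarrow> nat)
   \<Rightarrow> (nat \<Rightarrow> nat) \<Rightarrow> real" where
  "error_prob \<delta> K D n R g f \<phi> d =
     (1 / real (card (library D n R))) *
     (\<Sum>w\<in>library D n R. \<Sum>e\<in>erasure_patterns K n.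
        pattern_prob \<delta> K n e *
        (if \<exists>k\<in>{1..K}. \<phi> k d (channel_output n (f d w) e k) (g k w) \<noteq> w (d k)
         then 1 else 0))"

definition achievable ::
  "nat \<Rightarrow> (nat \<Rightarrow> real) \<Rightarrow> nat \<Rightarrow> nat \<Rightarrow> (nat \<Rightarrow> real) \<Rightarrow> real \<Rightarrow> bool" where
  "achievable F \<delta> K D M R \<longleftrightarrow>
     (\<forall>\<epsilon>>0. \<forall>N. \<exists>n\<ge>N. \<exists>g f \<phi>. valid_code F K D M n R g f \<and>
        (\<forall>d\<in>demands K D. error_prob \<delta> K D n R g f \<phi> d < \<epsilon>))"

definition capacity ::
  "nat \<Rightarrow> (nat \<Rightarrow> real) \<Rightarrow> nat \<Rightarrow> nat \<Rightarrow> (nat \<Rightarrow> real) \<Rightarrow> real" where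
  "capacity F \<delta> K D M = Sup {R. achievable F \<delta> K D M R}"

end

theory Submission
  imports Defs "HOL-Number_Theory.Cong"
begin

(* Fix a nonempty set S of receivers, sorted by increasing erasure probability, and consider the
   D demand vectors in which the i-th receiver of S asks for file (i + j) mod D + 1.  Give the
   i-th receiver the caches of all of S and the files requested by the receivers after it.
   Fano's inequality, averaged over the erasure pattern, bounds the entropy of its file by
   1 - \<delta>\<^sub>i times the drop of an erasure-averaged chain entropy of the transmitted sequence,
   plus ln 2 + \<epsilon> n R ln 2.  After division by 1 - \<delta>\<^sub>i these drops telescope, because the chain
   entropy decreases in the success probability and the receivers are degraded in this order;
   what remains is at most n F ln 2.  On the other side, averaging over the D rotations and a
   Han-type inequality bound the accumulated file entropies from below by
   (\<Sum>\<^sub>k 1 / (1 - \<delta>\<^sub>k)) (H(W) - H(caches)) \<ge> (\<Sum>\<^sub>k 1 / (1 - \<delta>\<^sub>k)) (D n R - n M\<^sub>S) ln 2,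
   up to lower-order terms, and letting \<epsilon> \<rightarrow> 0 and n \<rightarrow> \<infinity> gives the bound. *)

section \<open>Entropy of finitely supported distributions\<close>

locale finite_dist =
  fixes \<Omega> :: "'a set" and p :: "'a \<Rightarrow> real"
  assumes finite_space: "finite \<Omega>"
    and p_nonneg: "\<And>w. w \<in> \<Omega> \<Longrightarrow> 0 \<le> p w"
    and sum_p: "sum p \<Omega> = 1"
begin

definition law :: "('a \<Rightarrow> 'b) \<Rightarrow> 'b \<Rightarrow> real" where
  "law X x = sum p {w \<in> \<Omega>. X w = x}"

definition entropy :: "('a \<Rightarrow> 'b) \<Rightarrow> real" where
  "entropy X = - (\<Sum>w\<in>\<Omega>. p w * ln (law X (X w)))"

definition cond_entropy :: "('a \<Rightarrow> 'b) \<Rightarrow> ('a \<Rightarrow> 'c) \<Rightarrow> real" where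
  "cond_entropy X Y = entropy (\<lambda>w. (X w, Y w)) - entropy Y"

lemma space_nonempty: "\<Omega> \<noteq> {}"
  using sum_p by auto

lemma weighted_sum_cong:
  assumes "\<And>w. w \<in> \<Omega> \<Longrightarrow> 0 < p w \<Longrightarrow> f w = g w"
  shows "(\<Sum>w\<in>\<Omega>. p w * f w) = (\<Sum>w\<in>\<Omega>. p w * g w)"
  using assms p_nonneg by (intro sum.cong) (auto simp: le_less)

lemma weighted_sum_mono:
  assumes "\<And>w. w \<in> \<Omega> \<Longrightarrow> 0 < p w \<Longrightarrow> f w \<le> g w"
  shows "(\<Sum>w\<in>\<Omega>. p w * f w) \<le> (\<Sum>w\<in>\<Omega>. p w * g w)"
proof (rule sum_mono)
  fix w assume w: "w \<in> \<Omega>"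
  show "p w * f w \<le> p w * g w"
    using assms[OF w] p_nonneg[OF w] by (cases "p w = 0") (auto intro: mult_left_mono)
qed

lemma weighted_sum_const: "(\<Sum>w\<in>\<Omega>. p w * c) = c"
  using sum_p by (simp add: sum_distrib_right[symmetric])

lemma law_nonneg: "0 \<le> law X x"
  unfolding law_def by (rule sum_nonneg) (auto intro: p_nonneg)

lemma law_pos: "w \<in> \<Omega> \<Longrightarrow> 0 < p w \<Longrightarrow> 0 < law X (X w)"
  unfolding law_def using finite_space p_nonneg
  by (intro order.strict_trans2[OF _ member_le_sum]) auto

lemma law_mono:
  assumes "\<And>w'. w' \<in> \<Omega> \<Longrightarrow> X w' = X w \<Longrightarrow> Y w' = Y w"
  shows "law X (X w) \<le> law Y (Y w)"
  unfolding law_def using finite_space p_nonneg assms by (intro sum_mono2) auto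

lemma law_cong:
  assumes "\<And>w'. w' \<in> \<Omega> \<Longrightarrow> X w' = X w \<longleftrightarrow> Y w' = Y w"
  shows "law X (X w) = law Y (Y w)"
  unfolding law_def using assms by (intro sum.cong) auto

lemma entropy_cong:
  assumes "\<And>w w'. w \<in> \<Omega> \<Longrightarrow> w' \<in> \<Omega> \<Longrightarrow> X w' = X w \<longleftrightarrow> Y w' = Y w"
  shows "entropy X = entropy Y"
proof -
  have "law X (X w) = law Y (Y w)" if "w \<in> \<Omega>" for w
    using assms that by (intro law_cong) auto
  then show ?thesis
    unfolding entropy_def by (simp cong: sum.cong)
qed

lemma cond_entropy_cong:
  assumes "\<And>w w'. w \<in> \<Omega> \<Longrightarrow> w' \<in> \<Omega> \<Longrightarrow>
      (X w' = X w \<and> Y w' = Y w) \<longleftrightarrow> (X' w' = X' w \<and> Y' w' = Y' w)"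
    and "\<And>w w'. w \<in> \<Omega> \<Longrightarrow> w' \<in> \<Omega> \<Longrightarrow> Y w' = Y w \<longleftrightarrow> Y' w' = Y' w"
  shows "cond_entropy X Y = cond_entropy X' Y'"
  unfolding cond_entropy_def
  using entropy_cong[of "\<lambda>w. (X w, Y w)" "\<lambda>w. (X' w, Y' w)"] entropy_cong[of Y Y'] assms by auto

lemma sum_by_law: "(\<Sum>w\<in>\<Omega>. p w * h (X w)) = (\<Sum>x\<in>X ` \<Omega>. law X x * h x)"
proof -
  have "(\<Sum>w\<in>\<Omega>. p w * h (X w)) = (\<Sum>x\<in>X ` \<Omega>. \<Sum>w\<in>{w \<in> \<Omega>. X w = x}. p w * h (X w))"
    by (rule sum.image_gen[OF finite_space])
  also have "\<dots> = (\<Sum>x\<in>X ` \<Omega>. law X x * h x)"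
    unfolding law_def sum_distrib_right by (intro sum.cong) auto
  finally show ?thesis .
qed

lemma sum_law: "(\<Sum>x\<in>X ` \<Omega>. law X x) = 1"
  using sum_by_law[of "\<lambda>_. 1" X] sum_p by simp

lemma sum_law_pair_fibre:
  "(\<Sum>x\<in>X ` {w \<in> \<Omega>. Z w = z}. law (\<lambda>w. (Z w, X w)) (z, x)) = law Z z"
proof -
  have "law Z z = (\<Sum>x\<in>X ` {w \<in> \<Omega>. Z w = z}. sum p {w \<in> {w \<in> \<Omega>. Z w = z}. X w = x})"
    unfolding law_def using finite_space by (intro sum.image_gen) auto
  also have "\<dots> = (\<Sum>x\<in>X ` {w \<in> \<Omega>. Z w = z}. law (\<lambda>w. (Z w, X w)) (z, x))"
    unfolding law_def by (intro sum.cong) (auto intro: sum.cong)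
  finally show ?thesis by simp
qed

lemma gibbs_inequality:
  assumes Q_nonneg: "\<And>v. 0 \<le> Q v"
    and Q_pos: "\<And>w. w \<in> \<Omega> \<Longrightarrow> 0 < p w \<Longrightarrow> 0 < Q (V w)"
  shows "(\<Sum>w\<in>\<Omega>. p w * ln (Q (V w) / law V (V w))) \<le> (\<Sum>v\<in>V ` \<Omega>. Q v) - 1"
proof -
  have "(\<Sum>w\<in>\<Omega>. p w * ln (Q (V w) / law V (V w))) \<le> (\<Sum>w\<in>\<Omega>. p w * (Q (V w) / law V (V w) - 1))"
    using Q_pos law_pos by (intro weighted_sum_mono ln_le_minus_one divide_pos_pos)
  also have "\<dots> = (\<Sum>v\<in>V ` \<Omega>. law V v * (Q v / law V v)) - 1"
    using sum_p sum_by_law[of "\<lambda>v. Q v / law V v" V] by (simp add: right_diff_distrib sum_subtractf)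
  also have "(\<Sum>v\<in>V ` \<Omega>. law V v * (Q v / law V v)) \<le> (\<Sum>v\<in>V ` \<Omega>. Q v)"
    using Q_nonneg by (intro sum_mono) (simp add: mult_le_cancel_left1)
  finally show ?thesis by simp
qed

lemma cond_entropy_eq_sum:
  "cond_entropy X Y =
     (\<Sum>w\<in>\<Omega>. p w * (ln (law Y (Y w)) - ln (law (\<lambda>w. (X w, Y w)) (X w, Y w))))"
  unfolding cond_entropy_def entropy_def by (simp add: sum_subtractf algebra_simps)

lemma cond_entropy_nonneg: "0 \<le> cond_entropy X Y"
proof -
  have "(\<Sum>w\<in>\<Omega>. p w * 0) \<le> cond_entropy X Y"
    unfolding cond_entropy_eq_sum
  proof (rule weighted_sum_mono)
    fix w assume "w \<in> \<Omega>" "0 < p w"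
    then have "0 < law (\<lambda>w. (X w, Y w)) (X w, Y w)"
      and "law (\<lambda>w. (X w, Y w)) (X w, Y w) \<le> law Y (Y w)"
      by (auto intro: law_pos law_mono)
    then show "0 \<le> ln (law Y (Y w)) - ln (law (\<lambda>w. (X w, Y w)) (X w, Y w))"
      by simp
  qed
  then show ?thesis by simp
qed

lemma cond_entropy_const: "cond_entropy (\<lambda>_. c) Y = 0"
  unfolding cond_entropy_def by (simp add: entropy_cong[of "\<lambda>w. (c, Y w)" Y])

lemma entropy_eq_cond_entropy_unit: "entropy X = cond_entropy X (\<lambda>_. ())"
proof -
  have "law (\<lambda>_. ()) () = 1"
    unfolding law_def using sum_p by simp
  then have "entropy (\<lambda>_. ()) = 0"
    unfolding entropy_def by simp
  then show ?thesis
    unfolding cond_entropy_def by (simp add: entropy_cong[of X "\<lambda>w. (X w, ())"])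
qed

lemma cond_entropy_le_ln_fibre_card:
  fixes X :: "'a \<Rightarrow> 'x" and Z :: "'a \<Rightarrow> 'z"
  shows "cond_entropy X Z \<le> (\<Sum>w\<in>\<Omega>. p w * ln (card (X ` {w' \<in> \<Omega>. Z w' = Z w})))"
proof -
  define N where "N z = real (card (X ` {w' \<in> \<Omega>. Z w' = z}))" for z
  define V where "V w = (Z w, X w)" for w
  define Q where "Q v = law Z (fst v) / N (fst v)" for v :: "'z \<times> 'x"
  have N_pos: "z \<in> Z ` \<Omega> \<Longrightarrow> 0 < N z" for z
    unfolding N_def using finite_space by (auto simp: card_gt_0_iff)
  have "V ` \<Omega> = Sigma (Z ` \<Omega>) (\<lambda>z. X ` {w' \<in> \<Omega>. Z w' = z})"
    unfolding V_def by (auto simp: image_iff) metis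
  then have "(\<Sum>v\<in>V ` \<Omega>. Q v) = (\<Sum>z\<in>Z ` \<Omega>. \<Sum>x\<in>X ` {w' \<in> \<Omega>. Z w' = z}. law Z z / N z)"
    unfolding Q_def using finite_space by (subst sum.Sigma) (auto simp: split_def)
  also have "\<dots> = (\<Sum>z\<in>Z ` \<Omega>. law Z z)"
    using N_pos by (intro sum.cong) (auto simp: N_def)
  also have "\<dots> = 1"
    by (rule sum_law)
  finally have "(\<Sum>v\<in>V ` \<Omega>. Q v) = 1" .
  moreover have "(\<Sum>w\<in>\<Omega>. p w * ln (Q (V w) / law V (V w))) \<le> (\<Sum>v\<in>V ` \<Omega>. Q v) - 1"
  proof (rule gibbs_inequality)
    show "0 \<le> Q v" for v
      unfolding Q_def N_def by (simp add: law_nonneg)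
    show "0 < Q (V w)" if "w \<in> \<Omega>" "0 < p w" for w
      unfolding Q_def V_def using law_pos[OF that, of Z] N_pos[of "Z w"] that by simp
  qed
  moreover have "(\<Sum>w\<in>\<Omega>. p w * ln (Q (V w) / law V (V w))) =
      (\<Sum>w\<in>\<Omega>. p w * ((ln (law Z (Z w)) - ln (law (\<lambda>w. (X w, Z w)) (X w, Z w))) - ln (N (Z w))))"
  proof (rule weighted_sum_cong)
    fix w assume w: "w \<in> \<Omega>" "0 < p w"
    have "law V (V w) = law (\<lambda>w. (X w, Z w)) (X w, Z w)"
      unfolding V_def by (rule law_cong) auto
    then show "ln (Q (V w) / law V (V w)) =
        ln (law Z (Z w)) - ln (law (\<lambda>w. (X w, Z w)) (X w, Z w)) - ln (N (Z w))"
      using w law_pos[OF w, of Z] law_pos[OF w, of "\<lambda>w. (X w, Z w)"] N_pos[of "Z w"]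
      by (simp add: Q_def V_def ln_div ln_mult)
  qed
  ultimately show ?thesis
    unfolding cond_entropy_eq_sum N_def by (simp add: right_diff_distrib sum_subtractf)
qed

lemma cond_entropy_le_ln_card: "cond_entropy X Z \<le> ln (card (X ` \<Omega>))"
proof -
  have "cond_entropy X Z \<le> (\<Sum>w\<in>\<Omega>. p w * ln (card (X ` {w' \<in> \<Omega>. Z w' = Z w})))"
    by (rule cond_entropy_le_ln_fibre_card)
  also have "\<dots> \<le> (\<Sum>w\<in>\<Omega>. p w * ln (card (X ` \<Omega>)))"
  proof (rule weighted_sum_mono)
    fix w assume "w \<in> \<Omega>"
    then have "0 < card (X ` {w' \<in> \<Omega>. Z w' = Z w})"
      and "card (X ` {w' \<in> \<Omega>. Z w' = Z w}) \<le> card (X ` \<Omega>)"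
      using finite_space by (auto simp: card_gt_0_iff intro: card_mono)
    then show "ln (card (X ` {w' \<in> \<Omega>. Z w' = Z w})) \<le> ln (card (X ` \<Omega>))"
      by simp
  qed
  finally show ?thesis
    by (simp add: weighted_sum_const)
qed

lemma entropy_le_ln_card: "entropy X \<le> ln (card (X ` \<Omega>))"
  using cond_entropy_le_ln_card[of X "\<lambda>_. ()"] by (simp add: entropy_eq_cond_entropy_unit)

lemma entropy_uniform_inj:
  assumes "\<And>w. w \<in> \<Omega> \<Longrightarrow> p w = 1 / card \<Omega>" and "inj_on X \<Omega>"
  shows "entropy X = ln (card \<Omega>)"
proof -
  have "law X (X w) = 1 / card \<Omega>" if "w \<in> \<Omega>" for w
  proof -
    have "{w' \<in> \<Omega>. X w' = X w} = {w}"
      using assms(2) that by (auto simp: inj_on_def)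
    then show ?thesis
      unfolding law_def using assms(1) that by simp
  qed
  then have "entropy X = - (\<Sum>w\<in>\<Omega>. p w * ln (1 / card \<Omega>))"
    unfolding entropy_def by (simp cong: sum.cong)
  then show ?thesis
    by (simp add: weighted_sum_const ln_div)
qed

text \<open>The weights below form the law under which \<open>X\<close> and \<open>Y\<close> are conditionally independent
  given \<open>Z\<close>.\<close>

lemma sum_cond_indep_law_le_1:
  fixes X :: "'a \<Rightarrow> 'x" and Y :: "'a \<Rightarrow> 'y" and Z :: "'a \<Rightarrow> 'z"
  shows "(\<Sum>(z, x, y)\<in>(\<lambda>w. (Z w, X w, Y w)) ` \<Omega>.
    law (\<lambda>w. (Z w, X w)) (z, x) * law (\<lambda>w. (Z w, Y w)) (z, y) / law Z z) \<le> 1"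
proof -
  define Q where
    "Q = (\<lambda>(z, x, y). law (\<lambda>w. (Z w, X w)) (z, x) * law (\<lambda>w. (Z w, Y w)) (z, y) / law Z z)"
  define Xz where "Xz z = X ` {w \<in> \<Omega>. Z w = z}" for z
  define Yz where "Yz z = Y ` {w \<in> \<Omega>. Z w = z}" for z
  have fin: "finite (Sigma (Z ` \<Omega>) (\<lambda>z. Xz z \<times> Yz z))"
    unfolding Xz_def Yz_def using finite_space by auto
  have "(\<Sum>v\<in>(\<lambda>w. (Z w, X w, Y w)) ` \<Omega>. Q v) \<le> (\<Sum>v\<in>Sigma (Z ` \<Omega>) (\<lambda>z. Xz z \<times> Yz z). Q v)"
    using fin by (intro sum_mono2) (auto simp: Q_def Xz_def Yz_def law_nonneg)
  also have "\<dots> = (\<Sum>z\<in>Z ` \<Omega>. \<Sum>xy\<in>Xz z \<times> Yz z. Q (z, xy))"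
    using fin finite_space unfolding Xz_def Yz_def by (subst sum.Sigma) (auto intro!: sum.cong)
  also have "\<dots> = (\<Sum>z\<in>Z ` \<Omega>. (\<Sum>x\<in>Xz z. law (\<lambda>w. (Z w, X w)) (z, x)) *
        (\<Sum>y\<in>Yz z. law (\<lambda>w. (Z w, Y w)) (z, y)) / law Z z)"
    unfolding Q_def by (simp add: sum_product sum.cartesian_product sum_divide_distrib split_def)
  also have "\<dots> = (\<Sum>z\<in>Z ` \<Omega>. law Z z)"
    unfolding Xz_def Yz_def sum_law_pair_fibre by (intro sum.cong) auto
  finally show ?thesis
    unfolding Q_def sum_law .
qed

lemma conditioning_reduces_entropy:
  fixes X :: "'a \<Rightarrow> 'x" and Y :: "'a \<Rightarrow> 'y" and Z :: "'a \<Rightarrow> 'z"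
  shows "cond_entropy X (\<lambda>w. (Y w, Z w)) \<le> cond_entropy X Z"
proof -
  define V where "V w = (Z w, X w, Y w)" for w
  define Q where
    "Q = (\<lambda>(z, x, y). law (\<lambda>w. (Z w, X w)) (z, x) * law (\<lambda>w. (Z w, Y w)) (z, y) / law Z z)"
  have "(\<Sum>w\<in>\<Omega>. p w * ln (Q (V w) / law V (V w))) \<le> (\<Sum>v\<in>V ` \<Omega>. Q v) - 1"
  proof (rule gibbs_inequality)
    show "0 \<le> Q v" for v
      unfolding Q_def by (auto simp: law_nonneg split: prod.splits)
    show "0 < Q (V w)" if "w \<in> \<Omega>" "0 < p w" for w
      unfolding Q_def V_def using law_pos[OF that, of Z] law_pos[OF that, of "\<lambda>w. (Z w, X w)"]
        law_pos[OF that, of "\<lambda>w. (Z w, Y w)"] by simp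
  qed
  moreover have "(\<Sum>v\<in>V ` \<Omega>. Q v) \<le> 1"
    using sum_cond_indep_law_le_1[of Z X Y] unfolding Q_def V_def .
  moreover have "(\<Sum>w\<in>\<Omega>. p w * ln (Q (V w) / law V (V w))) =
      (\<Sum>w\<in>\<Omega>. p w * ((ln (law (\<lambda>w. (Y w, Z w)) (Y w, Z w)) -
          ln (law (\<lambda>w. (X w, Y w, Z w)) (X w, Y w, Z w))) -
        (ln (law Z (Z w)) - ln (law (\<lambda>w. (X w, Z w)) (X w, Z w)))))"
  proof (rule weighted_sum_cong)
    fix w assume w: "w \<in> \<Omega>" "0 < p w"
    have "law V (V w) = law (\<lambda>w. (X w, Y w, Z w)) (X w, Y w, Z w)"
      and "law (\<lambda>w. (Z w, X w)) (Z w, X w) = law (\<lambda>w. (X w, Z w)) (X w, Z w)"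
      and "law (\<lambda>w. (Z w, Y w)) (Z w, Y w) = law (\<lambda>w. (Y w, Z w)) (Y w, Z w)"
      unfolding V_def by (auto intro: law_cong)
    then show "ln (Q (V w) / law V (V w)) =
        (ln (law (\<lambda>w. (Y w, Z w)) (Y w, Z w)) - ln (law (\<lambda>w. (X w, Y w, Z w)) (X w, Y w, Z w))) -
        (ln (law Z (Z w)) - ln (law (\<lambda>w. (X w, Z w)) (X w, Z w)))"
      using law_pos[OF w, of Z] law_pos[OF w, of "\<lambda>w. (X w, Z w)"]
        law_pos[OF w, of "\<lambda>w. (Y w, Z w)"] law_pos[OF w, of "\<lambda>w. (X w, Y w, Z w)"]
      by (simp add: Q_def V_def ln_div ln_mult)
  qed
  ultimately show ?thesis
    unfolding cond_entropy_eq_sum by (simp add: right_diff_distrib sum_subtractf)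
qed

lemma cond_entropy_le_coarser:
  assumes "\<And>w. w \<in> \<Omega> \<Longrightarrow> Z w = h (Z' w)"
  shows "cond_entropy X Z' \<le> cond_entropy X Z"
proof -
  have "cond_entropy X Z' = cond_entropy X (\<lambda>w. (Z' w, Z w))"
    using assms by (intro cond_entropy_cong) auto
  also have "\<dots> \<le> cond_entropy X Z"
    by (rule conditioning_reduces_entropy)
  finally show ?thesis .
qed

lemma cond_entropy_given_error_le:
  "cond_entropy X (\<lambda>w. (X w \<noteq> \<psi> (Z w), Z w)) \<le>
     sum p {w \<in> \<Omega>. X w \<noteq> \<psi> (Z w)} * ln (card (X ` \<Omega>))"
proof -
  define E where "E w = (X w \<noteq> \<psi> (Z w))" for w
  define fibre where "fibre w = X ` {w' \<in> \<Omega>. (E w', Z w') = (E w, Z w)}" for w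
  have "cond_entropy X (\<lambda>w. (E w, Z w)) \<le> (\<Sum>w\<in>\<Omega>. p w * ln (card (fibre w)))"
    unfolding fibre_def by (rule cond_entropy_le_ln_fibre_card)
  also have "\<dots> \<le> (\<Sum>w\<in>\<Omega>. p w * (if E w then ln (card (X ` \<Omega>)) else 0))"
  proof (rule weighted_sum_mono)
    fix w assume w: "w \<in> \<Omega>"
    have "0 < card (fibre w)"
      unfolding fibre_def using finite_space w by (auto simp: card_gt_0_iff)
    moreover have "card (fibre w) \<le> card (X ` \<Omega>)"
      unfolding fibre_def using finite_space by (intro card_mono) auto
    \<comment> \<open>without an error, \<open>X\<close> is determined by \<open>Z\<close>\<close>
    moreover have "\<not> E w \<Longrightarrow> card (fibre w) \<le> 1"
      using card_mono[of "{\<psi> (Z w)}" "fibre w"] unfolding fibre_def E_def by auto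
    ultimately show "ln (card (fibre w)) \<le> (if E w then ln (card (X ` \<Omega>)) else 0)"
      by auto
  qed
  also have "\<dots> = (\<Sum>w\<in>\<Omega>. if E w then p w * ln (card (X ` \<Omega>)) else 0)"
    by (intro sum.cong) auto
  also have "\<dots> = sum p {w \<in> \<Omega>. E w} * ln (card (X ` \<Omega>))"
    using finite_space by (simp add: sum.inter_filter[symmetric] sum_distrib_right)
  finally show ?thesis
    unfolding E_def .
qed

lemma fano_inequality:
  "cond_entropy X Z \<le> ln 2 + sum p {w \<in> \<Omega>. X w \<noteq> \<psi> (Z w)} * ln (card (X ` \<Omega>))"
proof -
  define E where "E w = (X w \<noteq> \<psi> (Z w))" for w
  have "entropy (\<lambda>w. (X w, Z w)) = entropy (\<lambda>w. (X w, E w, Z w))"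
    unfolding E_def by (rule entropy_cong) auto
  then have chain_rule: "cond_entropy X Z = cond_entropy X (\<lambda>w. (E w, Z w)) + cond_entropy E Z"
    unfolding cond_entropy_def by simp
  have "card (E ` \<Omega>) \<le> card (UNIV :: bool set)"
    by (intro card_mono) auto
  moreover have "0 < card (E ` \<Omega>)"
    using finite_space space_nonempty by (simp add: card_gt_0_iff)
  ultimately have "ln (card (E ` \<Omega>)) \<le> ln 2"
    by simp
  then have "cond_entropy E Z \<le> ln 2"
    by (rule order.trans[OF cond_entropy_le_ln_card])
  with chain_rule show ?thesis
    using cond_entropy_given_error_le[of X \<psi> Z] unfolding E_def by linarith
qed

end

section \<open>Random subsets\<close>

definition subset_weight :: "real \<Rightarrow> 'a set \<Rightarrow> 'a set \<Rightarrow> real" where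
  "subset_weight q T A = q ^ card A * (1 - q) ^ card (T - A)"

definition subset_exp :: "real \<Rightarrow> 'a set \<Rightarrow> ('a set \<Rightarrow> real) \<Rightarrow> real" where
  "subset_exp q T \<phi> = (\<Sum>A\<in>Pow T. subset_weight q T A * \<phi> A)"

lemma subset_exp_empty [simp]: "subset_exp q {} \<phi> = \<phi> {}"
  unfolding subset_exp_def subset_weight_def by simp

lemma subset_weight_insert:
  assumes "finite T" "a \<notin> T" "A \<subseteq> T"
  shows "subset_weight q (insert a T) (insert a A) = q * subset_weight q T A"
    and "subset_weight q (insert a T) A = (1 - q) * subset_weight q T A"
proof -
  have "finite A" "a \<notin> A" "a \<notin> T - A"
    using assms finite_subset by auto
  moreover have "insert a T - insert a A = T - A" and "insert a T - A = insert a (T - A)"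
    using assms by auto
  ultimately show "subset_weight q (insert a T) (insert a A) = q * subset_weight q T A"
    and "subset_weight q (insert a T) A = (1 - q) * subset_weight q T A"
    unfolding subset_weight_def using assms(1) by simp_all
qed

lemma subset_exp_insert:
  assumes "finite T" "a \<notin> T"
  shows "subset_exp q (insert a T) \<phi> =
    q * subset_exp q T (\<lambda>A. \<phi> (insert a A)) + (1 - q) * subset_exp q T \<phi>"
proof -
  have inj: "inj_on (insert a) (Pow T)"
    using assms unfolding inj_on_def by (metis Pow_iff insert_ident subset_iff)
  have "subset_exp q (insert a T) \<phi> =
      (\<Sum>A\<in>insert a ` Pow T. subset_weight q (insert a T) A * \<phi> A) +
      (\<Sum>A\<in>Pow T. subset_weight q (insert a T) A * \<phi> A)"
    unfolding subset_exp_def Pow_insert using assms by (subst sum.union_disjoint) auto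
  also have "(\<Sum>A\<in>insert a ` Pow T. subset_weight q (insert a T) A * \<phi> A) =
      (\<Sum>A\<in>Pow T. subset_weight q (insert a T) (insert a A) * \<phi> (insert a A))"
    using inj by (simp add: sum.reindex)
  also have "\<dots> = q * subset_exp q T (\<lambda>A. \<phi> (insert a A))"
    unfolding subset_exp_def sum_distrib_left using assms
    by (intro sum.cong) (auto simp: subset_weight_insert)
  also have "(\<Sum>A\<in>Pow T. subset_weight q (insert a T) A * \<phi> A) = (1 - q) * subset_exp q T \<phi>"
    unfolding subset_exp_def sum_distrib_left using assms
    by (intro sum.cong) (auto simp: subset_weight_insert)
  finally show ?thesis .
qed

lemma subset_exp_const: "finite T \<Longrightarrow> subset_exp q T (\<lambda>_. c) = c"
  by (induction T rule: finite_induct) (simp_all add: subset_exp_insert left_diff_distrib)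

lemma subset_exp_add: "subset_exp q T (\<lambda>A. f A + g A) = subset_exp q T f + subset_exp q T g"
  unfolding subset_exp_def by (simp add: algebra_simps sum.distrib)

lemma subset_exp_diff: "subset_exp q T (\<lambda>A. f A - g A) = subset_exp q T f - subset_exp q T g"
  unfolding subset_exp_def by (simp add: algebra_simps sum_subtractf)

lemma subset_exp_cong:
  "(\<And>A. A \<subseteq> T \<Longrightarrow> f A = g A) \<Longrightarrow> subset_exp q T f = subset_exp q T g"
  unfolding subset_exp_def by (intro sum.cong) auto

lemma subset_weight_nonneg: "0 \<le> q \<Longrightarrow> q \<le> 1 \<Longrightarrow> 0 \<le> subset_weight q T A"
  unfolding subset_weight_def by simp

lemma subset_exp_mono:
  assumes "0 \<le> q" "q \<le> 1" "\<And>A. A \<subseteq> T \<Longrightarrow> f A \<le> g A"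
  shows "subset_exp q T f \<le> subset_exp q T g"
  unfolding subset_exp_def using assms
  by (intro sum_mono mult_left_mono subset_weight_nonneg) auto

lemma subset_exp_nonneg:
  "0 \<le> q \<Longrightarrow> q \<le> 1 \<Longrightarrow> (\<And>A. A \<subseteq> T \<Longrightarrow> 0 \<le> f A) \<Longrightarrow> 0 \<le> subset_exp q T f"
  unfolding subset_exp_def by (intro sum_nonneg mult_nonneg_nonneg subset_weight_nonneg) auto

lemma subset_exp_le_const:
  "finite T \<Longrightarrow> 0 \<le> q \<Longrightarrow> q \<le> 1 \<Longrightarrow> (\<And>A. A \<subseteq> T \<Longrightarrow> f A \<le> c) \<Longrightarrow> subset_exp q T f \<le> c"
  using subset_exp_mono[of q T f "\<lambda>_. c"] subset_exp_const[of T q c] by simp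

lemma finite_dist_subsets:
  "finite T \<Longrightarrow> 0 \<le> q \<Longrightarrow> q \<le> 1 \<Longrightarrow> finite_dist (Pow T) (subset_weight q T)"
  using subset_exp_const[of T q 1] unfolding subset_exp_def
  by unfold_locales (auto intro: subset_weight_nonneg)

text \<open>A larger inclusion probability favours larger subsets, on which an antitone \<open>f\<close> is smaller.\<close>

lemma subset_exp_antimono_prob:
  assumes "finite T" "0 \<le> q" "q \<le> q'" "q' \<le> 1"
    and "\<And>A B. A \<subseteq> B \<Longrightarrow> B \<subseteq> T \<Longrightarrow> f B \<le> f A"
  shows "subset_exp q' T f \<le> subset_exp q T f"
  using assms(1,5)
proof (induction T arbitrary: f rule: finite_induct)
  case (insert a T)
  define fa where "fa A = f (insert a A)" for A
  have IH_fa: "subset_exp q' T fa \<le> subset_exp q T fa"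
  proof (rule insert.IH)
    fix A B assume "A \<subseteq> B" "B \<subseteq> T"
    then show "fa B \<le> fa A"
      unfolding fa_def by (intro insert.prems) auto
  qed
  have IH_f: "subset_exp q' T f \<le> subset_exp q T f"
    using insert.prems by (intro insert.IH) auto
  have "subset_exp q T fa \<le> subset_exp q T f"
  proof (rule subset_exp_mono)
    show "fa A \<le> f A" if "A \<subseteq> T" for A
      unfolding fa_def using that by (intro insert.prems) auto
  qed (use assms(2-4) in auto)
  then have "q' * subset_exp q T fa + (1 - q') * subset_exp q T f \<le>
      q * subset_exp q T fa + (1 - q) * subset_exp q T f"
    using assms(3) mult_right_mono[of q q' "subset_exp q T f - subset_exp q T fa"]
    by (simp add: algebra_simps)
  moreover have "q' * subset_exp q' T fa + (1 - q') * subset_exp q' T f \<le>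
      q' * subset_exp q T fa + (1 - q') * subset_exp q T f"
    using IH_fa IH_f assms(2-4) by (intro add_mono mult_left_mono) auto
  ultimately show ?case
    using insert.hyps subset_exp_insert[of T a _ f] unfolding fa_def by simp
qed simp

lemma sum_PiE_bool_insert:
  fixes w :: "'i \<Rightarrow> bool \<Rightarrow> real"
  assumes "finite I" "a \<notin> I"
  shows "(\<Sum>e\<in>PiE (insert a I) (\<lambda>_. UNIV). (\<Prod>i\<in>insert a I. w i (e i)) * f e) =
    w a True * (\<Sum>e\<in>PiE I (\<lambda>_. UNIV). (\<Prod>i\<in>I. w i (e i)) * f (e(a := True))) +
    w a False * (\<Sum>e\<in>PiE I (\<lambda>_. UNIV). (\<Prod>i\<in>I. w i (e i)) * f (e(a := False)))"
proof -
  have weight: "(\<Prod>i\<in>insert a I. w i ((e(a := y)) i)) = w a y * (\<Prod>i\<in>I. w i (e i))" for e y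
  proof -
    have "(\<Prod>i\<in>I. w i ((e(a := y)) i)) = (\<Prod>i\<in>I. w i (e i))"
      using assms by (intro prod.cong) auto
    then show ?thesis
      using assms by simp
  qed
  have "(\<Sum>e\<in>PiE (insert a I) (\<lambda>_. UNIV). (\<Prod>i\<in>insert a I. w i (e i)) * f e) =
      (\<Sum>(y, e)\<in>UNIV \<times> PiE I (\<lambda>_. UNIV). (\<Prod>i\<in>insert a I. w i ((e(a := y)) i)) * f (e(a := y)))"
    unfolding PiE_insert_eq using inj_combinator[OF assms(2), of "\<lambda>_. UNIV"]
    by (subst sum.reindex) (auto simp: split_def)
  also have "\<dots> = (\<Sum>y\<in>UNIV. \<Sum>e\<in>PiE I (\<lambda>_. UNIV). w a y * ((\<Prod>i\<in>I. w i (e i)) * f (e(a := y))))"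
    unfolding weight sum.cartesian_product[symmetric] by (simp only: mult.assoc)
  finally show ?thesis
    by (simp add: UNIV_bool sum_distrib_left add.commute)
qed

text \<open>For independent erasures on a finite set \<open>I\<close> of (time, receiver) slots, the set of
  unerased time slots of receiver \<open>k\<close> is a random subset with inclusion probability \<open>1 - r\<^sub>0\<close>.\<close>

lemma sum_erasure_patterns_eq_subset_exp:
  fixes r :: "nat \<times> 'k \<Rightarrow> real"
  assumes "finite I" and "\<And>t. (t, k) \<in> I \<Longrightarrow> r (t, k) = r0"
  shows "(\<Sum>e\<in>PiE I (\<lambda>_. UNIV). (\<Prod>i\<in>I. if e i then r i else 1 - r i) *
            \<psi> {t. (t, k) \<in> I \<and> \<not> e (t, k)}) = subset_exp (1 - r0) {t. (t, k) \<in> I} \<psi>"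
  using assms
proof (induction I arbitrary: \<psi> rule: finite_induct)
  case (insert a I)
  define w where "w i b = (if b then r i else 1 - r i)" for i b
  define unerased where "unerased J e = {t. (t, k) \<in> J \<and> \<not> e (t, k)}"
    for J :: "(nat \<times> 'k) set" and e :: "nat \<times> 'k \<Rightarrow> bool"
  have IH: "(\<Sum>e\<in>PiE I (\<lambda>_. UNIV). (\<Prod>i\<in>I. w i (e i)) * \<psi>' (unerased I e)) =
      subset_exp (1 - r0) {t. (t, k) \<in> I} \<psi>'" for \<psi>'
    using insert.IH[of \<psi>'] insert.prems unfolding w_def unerased_def by auto
  have "(\<Sum>e\<in>PiE (insert a I) (\<lambda>_. UNIV). (\<Prod>i\<in>insert a I. w i (e i)) * \<psi> (unerased (insert a I) e)) =
      r a * (\<Sum>e\<in>PiE I (\<lambda>_. UNIV). (\<Prod>i\<in>I. w i (e i)) * \<psi> (unerased (insert a I) (e(a := True)))) +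
      (1 - r a) *
        (\<Sum>e\<in>PiE I (\<lambda>_. UNIV). (\<Prod>i\<in>I. w i (e i)) * \<psi> (unerased (insert a I) (e(a := False))))"
    using sum_PiE_bool_insert[OF insert.hyps, of w "\<lambda>e. \<psi> (unerased (insert a I) e)"]
    by (simp add: w_def)
  also have "\<dots> = subset_exp (1 - r0) {t. (t, k) \<in> insert a I} \<psi>"
  proof (cases "snd a = k")
    case True
    then obtain t0 where a: "a = (t0, k)"
      by (cases a) auto
    have "finite {t. (t, k) \<in> I}"
      using finite_imageI[OF insert.hyps(1), of fst] by (rule finite_subset[rotated]) force
    moreover have "t0 \<notin> {t. (t, k) \<in> I}"
      using insert.hyps a by auto
    moreover have "unerased (insert a I) (e(a := True)) = unerased I e"
      and "unerased (insert a I) (e(a := False)) = insert t0 (unerased I e)" for e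
      using a insert.hyps unfolding unerased_def by auto
    moreover have "{t. (t, k) \<in> insert a I} = insert t0 {t. (t, k) \<in> I}"
      using a by auto
    ultimately show ?thesis
      using insert.prems a IH[of "\<lambda>A. \<psi> (insert t0 A)"] by (simp add: IH subset_exp_insert)
  next
    case False
    then have "unerased (insert a I) (e(a := y)) = unerased I e" for e y
      using insert.hyps unfolding unerased_def by (cases a) auto
    moreover have "{t. (t, k) \<in> insert a I} = {t. (t, k) \<in> I}"
      using False by (cases a) auto
    ultimately show ?thesis
      by (simp add: IH left_diff_distrib)
  qed
  finally show ?case
    unfolding w_def unerased_def .
qed simp


locale finite_dist_pair = D1: finite_dist \<Omega>1 p1 + D2: finite_dist \<Omega>2 p2
  for \<Omega>1 :: "'a set" and p1 and \<Omega>2 :: "'b set" and p2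
begin

definition prod_p :: "'a \<times> 'b \<Rightarrow> real" where
  "prod_p x = p1 (fst x) * p2 (snd x)"

sublocale P: finite_dist "\<Omega>1 \<times> \<Omega>2" prod_p
proof
  show "finite (\<Omega>1 \<times> \<Omega>2)"
    using D1.finite_space D2.finite_space by simp
  show "0 \<le> prod_p x" if "x \<in> \<Omega>1 \<times> \<Omega>2" for x
    using that D1.p_nonneg D2.p_nonneg unfolding prod_p_def by auto
  show "sum prod_p (\<Omega>1 \<times> \<Omega>2) = 1"
    unfolding prod_p_def sum.cartesian_product'
    by (simp add: sum_distrib_left[symmetric] sum_distrib_right[symmetric] D1.sum_p D2.sum_p)
qed

lemma entropy_fst: "P.entropy (\<lambda>x. G (fst x)) = D1.entropy G"
proof -
  have law_fst: "P.law (\<lambda>x. G (fst x)) (G a) = D1.law G (G a)" for a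
  proof -
    have "{x \<in> \<Omega>1 \<times> \<Omega>2. G (fst x) = G a} = {a' \<in> \<Omega>1. G a' = G a} \<times> \<Omega>2"
      by auto
    then show ?thesis
      unfolding P.law_def D1.law_def prod_p_def
      by (simp add: sum.cartesian_product' sum_distrib_left[symmetric] D2.sum_p)
  qed
  have "(\<Sum>x\<in>\<Omega>1 \<times> \<Omega>2. prod_p x * ln (P.law (\<lambda>x. G (fst x)) (G (fst x)))) =
      (\<Sum>a\<in>\<Omega>1. p1 a * ln (D1.law G (G a)) * (\<Sum>b\<in>\<Omega>2. p2 b))"
    unfolding prod_p_def sum.cartesian_product' law_fst
    by (simp add: sum_distrib_left sum_distrib_right mult_ac)
  then show ?thesis
    unfolding P.entropy_def D1.entropy_def by (simp add: D2.sum_p)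
qed

lemma entropy_snd_indexed:
  "P.entropy (\<lambda>x. (snd x, G (snd x) (fst x))) =
     - (\<Sum>b\<in>\<Omega>2. p2 b * ln (p2 b)) + (\<Sum>b\<in>\<Omega>2. p2 b * D1.entropy (G b))"
proof -
  have law_indexed:
    "P.law (\<lambda>x. (snd x, G (snd x) (fst x))) (b, G b a) = p2 b * D1.law (G b) (G b a)"
    if "a \<in> \<Omega>1" "b \<in> \<Omega>2" for a b
  proof -
    have "{x \<in> \<Omega>1 \<times> \<Omega>2. (snd x, G (snd x) (fst x)) = (b, G b a)} =
        (\<lambda>a'. (a', b)) ` {a' \<in> \<Omega>1. G b a' = G b a}"
      using that by auto
    then show ?thesis
      unfolding P.law_def D1.law_def prod_p_def
      by (simp add: sum.reindex inj_on_def sum_distrib_left mult.commute)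
  qed
  have term_eq: "prod_p (a, b) * ln (P.law (\<lambda>x. (snd x, G (snd x) (fst x))) (b, G b a)) =
      p2 b * (p1 a * ln (p2 b)) + p2 b * (p1 a * ln (D1.law (G b) (G b a)))"
    if a: "a \<in> \<Omega>1" and b: "b \<in> \<Omega>2" for a b
  proof (cases "p1 a = 0 \<or> p2 b = 0")
    case False
    then have "0 < p1 a" "0 < p2 b"
      using D1.p_nonneg[OF a] D2.p_nonneg[OF b] by auto
    then show ?thesis
      using law_indexed[OF a b] D1.law_pos[OF a, of "G b"]
      by (simp add: prod_p_def ln_mult algebra_simps)
  qed (auto simp: prod_p_def)
  have "(\<Sum>x\<in>\<Omega>1 \<times> \<Omega>2.
        prod_p x * ln (P.law (\<lambda>x. (snd x, G (snd x) (fst x))) (snd x, G (snd x) (fst x)))) =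
      (\<Sum>a\<in>\<Omega>1. \<Sum>b\<in>\<Omega>2. p2 b * (p1 a * ln (p2 b)) + p2 b * (p1 a * ln (D1.law (G b) (G b a))))"
    unfolding sum.cartesian_product' using term_eq by (intro sum.cong refl) auto
  also have "\<dots> = (\<Sum>b\<in>\<Omega>2. \<Sum>a\<in>\<Omega>1.
      p2 b * (p1 a * ln (p2 b)) + p2 b * (p1 a * ln (D1.law (G b) (G b a))))"
    by (rule sum.swap)
  also have "\<dots> = (\<Sum>b\<in>\<Omega>2. p2 b * ln (p2 b)) +
      (\<Sum>b\<in>\<Omega>2. p2 b * (\<Sum>a\<in>\<Omega>1. p1 a * ln (D1.law (G b) (G b a))))"
    by (simp add: sum.distrib sum_distrib_left[symmetric] D1.weighted_sum_const)
  finally show ?thesis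
    unfolding P.entropy_def D1.entropy_def by (simp add: sum_negf)
qed

end


section \<open>Observations through an erasure channel\<close>

definition observed :: "nat set \<Rightarrow> (nat \<Rightarrow> 'x) \<Rightarrow> nat \<Rightarrow> 'x option" where
  "observed A x = (\<lambda>t. if t \<in> A then Some (x t) else None)"

lemma observed_eq_iff: "observed A x = observed A' x' \<longleftrightarrow> A = A' \<and> (\<forall>t\<in>A. x t = x' t)"
proof
  assume eq: "observed A x = observed A' x'"
  then have "A = A'"
    unfolding observed_def by (metis option.distinct(1) set_eqI)
  with eq show "A = A' \<and> (\<forall>t\<in>A. x t = x' t)"
    unfolding observed_def by (metis option.inject)
qed (auto simp: observed_def)

text \<open>The sample space is enlarged by the set \<open>A\<close> of unerased time slots, a random subset of \<open>T\<close>
  independent of everything else.\<close>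

locale erasure_model = finite_dist_pair \<Omega> p "Pow T" "subset_weight q T"
  for \<Omega> :: "'a set" and p and T :: "nat set" and q
begin

lemma cond_entropy_observed:
  fixes X :: "'a \<Rightarrow> nat \<Rightarrow> 'x" and U :: "'a \<Rightarrow> 'u"
  shows "P.cond_entropy (\<lambda>x. observed (snd x) (X (fst x))) (\<lambda>x. U (fst x)) =
    - (\<Sum>A\<in>Pow T. subset_weight q T A * ln (subset_weight q T A)) +
    subset_exp q T (\<lambda>A. D1.cond_entropy (\<lambda>w. observed A (X w)) U)"
proof -
  \<comment> \<open>an observation reveals which slots were erased\<close>
  have "P.entropy (\<lambda>x. (observed (snd x) (X (fst x)), U (fst x))) =
      P.entropy (\<lambda>x. (snd x, observed (snd x) (X (fst x)), U (fst x)))"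
    by (rule P.entropy_cong) (auto simp: observed_eq_iff)
  also have "\<dots> = - (\<Sum>A\<in>Pow T. subset_weight q T A * ln (subset_weight q T A)) +
      (\<Sum>A\<in>Pow T. subset_weight q T A * D1.entropy (\<lambda>w. (observed A (X w), U w)))"
    by (rule entropy_snd_indexed[where G = "\<lambda>A w. (observed A (X w), U w)"])
  finally have "P.entropy (\<lambda>x. (observed (snd x) (X (fst x)), U (fst x))) = \<dots>" .
  moreover have "subset_exp q T (\<lambda>A. D1.cond_entropy (\<lambda>w. observed A (X w)) U) =
      (\<Sum>A\<in>Pow T. subset_weight q T A * D1.entropy (\<lambda>w. (observed A (X w), U w))) - D1.entropy U"
    using subset_exp_diff[of q T "\<lambda>A. D1.entropy (\<lambda>w. (observed A (X w), U w))" "\<lambda>_. D1.entropy U"]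
      subset_exp_const[OF D2.finite_space[simplified]]
    unfolding D1.cond_entropy_def subset_exp_def by simp
  ultimately show ?thesis
    unfolding P.cond_entropy_def entropy_fst by simp
qed

lemma prob_eq_subset_exp:
  "sum prod_p {x \<in> \<Omega> \<times> Pow T. E (fst x) (snd x)} =
    (\<Sum>w\<in>\<Omega>. p w * subset_exp q T (\<lambda>A. if E w A then 1 else 0))"
proof -
  have "sum prod_p {x \<in> \<Omega> \<times> Pow T. E (fst x) (snd x)} =
      (\<Sum>x\<in>\<Omega> \<times> Pow T. if E (fst x) (snd x) then prod_p x else 0)"
    using P.finite_space by (rule sum.inter_filter)
  also have "\<dots> = (\<Sum>w\<in>\<Omega>. \<Sum>A\<in>Pow T. p w * (subset_weight q T A * (if E w A then 1 else 0)))"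
    unfolding sum.cartesian_product' by (intro sum.cong refl) (simp add: prod_p_def)
  finally show ?thesis
    unfolding subset_exp_def sum_distrib_left .
qed

lemma erasure_fano:
  fixes X :: "'a \<Rightarrow> nat \<Rightarrow> 'x" and W :: "'a \<Rightarrow> 'b" and U :: "'a \<Rightarrow> 'u" and U' :: "'a \<Rightarrow> 'v"
  assumes U': "\<And>w w'. w \<in> \<Omega> \<Longrightarrow> w' \<in> \<Omega> \<Longrightarrow> (W w' = W w \<and> U w' = U w) \<longleftrightarrow> U' w' = U' w"
  shows "D1.cond_entropy W U \<le>
     subset_exp q T (\<lambda>A. D1.cond_entropy (\<lambda>w. observed A (X w)) U) -
     subset_exp q T (\<lambda>A. D1.cond_entropy (\<lambda>w. observed A (X w)) U') + ln 2 +
     (\<Sum>w\<in>\<Omega>. p w * subset_exp q T (\<lambda>A. if W w \<noteq> \<psi> (observed A (X w)) (U w) then 1 else 0)) *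
       ln (card (W ` \<Omega>))"
proof -
  define Y where "Y x = observed (snd x) (X (fst x))" for x :: "'a \<times> nat set"
  define W1 where "W1 x = W (fst x)" for x :: "'a \<times> nat set"
  define U1 where "U1 x = U (fst x)" for x :: "'a \<times> nat set"
  define U1' where "U1' x = U' (fst x)" for x :: "'a \<times> nat set"
  have "P.cond_entropy W1 U1 = D1.cond_entropy W U"
    unfolding P.cond_entropy_def D1.cond_entropy_def W1_def U1_def
    using entropy_fst[of "\<lambda>w. (W w, U w)"] entropy_fst[of U] by simp
  \<comment> \<open>\<open>H(W | U) = I(W; Y | U) + H(W | Y, U)\<close>, and \<open>(W, U)\<close> carries the same information as \<open>U'\<close>\<close>
  moreover have "P.cond_entropy W1 U1 =
      P.cond_entropy Y U1 - P.cond_entropy Y (\<lambda>x. (W1 x, U1 x)) +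
      P.cond_entropy W1 (\<lambda>x. (Y x, U1 x))"
  proof -
    have "P.entropy (\<lambda>x. (W1 x, Y x, U1 x)) = P.entropy (\<lambda>x. (Y x, W1 x, U1 x))"
      by (rule P.entropy_cong) auto
    then show ?thesis
      unfolding P.cond_entropy_def by simp
  qed
  moreover have "P.cond_entropy Y (\<lambda>x. (W1 x, U1 x)) = P.cond_entropy Y U1'"
  proof (rule P.cond_entropy_cong)
    fix x x' assume "x \<in> \<Omega> \<times> Pow T" "x' \<in> \<Omega> \<times> Pow T"
    then have "(W1 x' = W1 x \<and> U1 x' = U1 x) \<longleftrightarrow> U1' x' = U1' x"
      unfolding W1_def U1_def U1'_def by (intro U') auto
    then show "(Y x' = Y x \<and> (W1 x', U1 x') = (W1 x, U1 x)) \<longleftrightarrow> (Y x' = Y x \<and> U1' x' = U1' x)"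
      and "(W1 x', U1 x') = (W1 x, U1 x) \<longleftrightarrow> U1' x' = U1' x"
      by auto
  qed
  moreover have "P.cond_entropy W1 (\<lambda>x. (Y x, U1 x)) \<le> ln 2 +
      sum prod_p {x \<in> \<Omega> \<times> Pow T. W1 x \<noteq> \<psi> (Y x) (U1 x)} * ln (card (W1 ` (\<Omega> \<times> Pow T)))"
    using P.fano_inequality[of W1 "\<lambda>x. (Y x, U1 x)" "\<lambda>(y, u). \<psi> y u"] by simp
  moreover have "W1 ` (\<Omega> \<times> Pow T) = W ` \<Omega>"
    unfolding W1_def by force
  moreover have "sum prod_p {x \<in> \<Omega> \<times> Pow T. W1 x \<noteq> \<psi> (Y x) (U1 x)} =
      (\<Sum>w\<in>\<Omega>. p w * subset_exp q T (\<lambda>A. if W w \<noteq> \<psi> (observed A (X w)) (U w) then 1 else 0))"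
    unfolding W1_def Y_def U1_def by (rule prob_eq_subset_exp)
  ultimately show ?thesis
    unfolding Y_def U1_def U1'_def cond_entropy_observed by simp
qed

end


context finite_dist
begin

definition chain_entropy :: "('a \<Rightarrow> nat \<Rightarrow> 'x) \<Rightarrow> nat \<Rightarrow> real \<Rightarrow> ('a \<Rightarrow> 'u) \<Rightarrow> real" where
  "chain_entropy X n q U =
     (\<Sum>t<n. subset_exp q {..<t} (\<lambda>B. cond_entropy (\<lambda>w. X w t) (\<lambda>w. (observed B (X w), U w))))"

lemma subset_exp_observed_eq_chain_entropy:
  fixes X :: "'a \<Rightarrow> nat \<Rightarrow> 'x" and U :: "'a \<Rightarrow> 'u"
  shows "subset_exp q {..<n} (\<lambda>A. cond_entropy (\<lambda>w. observed A (X w)) U) =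
    q * chain_entropy X n q U"
proof (induction n)
  case 0
  have "observed {} x = (\<lambda>_. None)" for x :: "nat \<Rightarrow> 'x"
    unfolding observed_def by auto
  then show ?case
    unfolding chain_entropy_def by (simp add: cond_entropy_const)
next
  case (Suc n)
  have chain_rule: "cond_entropy (\<lambda>w. observed (insert n B) (X w)) U =
      cond_entropy (\<lambda>w. observed B (X w)) U +
      cond_entropy (\<lambda>w. X w n) (\<lambda>w. (observed B (X w), U w))"
    if "B \<subseteq> {..<n}" for B
  proof -
    have "entropy (\<lambda>w. (observed (insert n B) (X w), U w)) =
        entropy (\<lambda>w. (X w n, observed B (X w), U w))"
      using that by (intro entropy_cong) (auto simp: observed_eq_iff)
    then show ?thesis
      unfolding cond_entropy_def by simp
  qed
  have "subset_exp q {..<Suc n} (\<lambda>A. cond_entropy (\<lambda>w. observed A (X w)) U) =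
      q * subset_exp q {..<n} (\<lambda>B. cond_entropy (\<lambda>w. observed (insert n B) (X w)) U) +
      (1 - q) * subset_exp q {..<n} (\<lambda>A. cond_entropy (\<lambda>w. observed A (X w)) U)"
    unfolding lessThan_Suc by (rule subset_exp_insert) auto
  also have "subset_exp q {..<n} (\<lambda>B. cond_entropy (\<lambda>w. observed (insert n B) (X w)) U) =
      subset_exp q {..<n} (\<lambda>B. cond_entropy (\<lambda>w. observed B (X w)) U) +
      subset_exp q {..<n} (\<lambda>B. cond_entropy (\<lambda>w. X w n) (\<lambda>w. (observed B (X w), U w)))"
    unfolding subset_exp_add[symmetric] by (intro subset_exp_cong chain_rule)
  finally show ?case
    unfolding Suc chain_entropy_def by (simp add: algebra_simps)
qed

text \<open>Fewer erasures of the past leave less uncertainty about the present symbol.\<close>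

lemma chain_entropy_antimono_prob:
  fixes X :: "'a \<Rightarrow> nat \<Rightarrow> 'x" and U :: "'a \<Rightarrow> 'u"
  assumes "0 \<le> q" "q \<le> q'" "q' \<le> 1"
  shows "chain_entropy X n q' U \<le> chain_entropy X n q U"
  unfolding chain_entropy_def
proof (intro sum_mono subset_exp_antimono_prob[OF _ assms])
  fix t and B B' :: "nat set"
  assume "B \<subseteq> B'"
  then show "cond_entropy (\<lambda>w. X w t) (\<lambda>w. (observed B' (X w), U w)) \<le>
      cond_entropy (\<lambda>w. X w t) (\<lambda>w. (observed B (X w), U w))"
    by (intro cond_entropy_le_coarser[where h = "\<lambda>(y, u). (\<lambda>s. if s \<in> B then y s else None, u)"])
      (auto simp: observed_def fun_eq_iff)
qed simp

lemma chain_entropy_nonneg: "0 \<le> q \<Longrightarrow> q \<le> 1 \<Longrightarrow> 0 \<le> chain_entropy X n q U"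
  unfolding chain_entropy_def by (intro sum_nonneg subset_exp_nonneg cond_entropy_nonneg)

lemma chain_entropy_le:
  assumes "0 \<le> q" "q \<le> 1" and card: "\<And>t. t < n \<Longrightarrow> card ((\<lambda>w. X w t) ` \<Omega>) \<le> c"
  shows "chain_entropy X n q U \<le> n * ln c"
proof -
  have "chain_entropy X n q U \<le> (\<Sum>t<n. ln c)"
    unfolding chain_entropy_def
  proof (intro sum_mono subset_exp_le_const assms(1,2))
    fix t B assume "t \<in> {..<n}"
    then have "0 < card ((\<lambda>w. X w t) ` \<Omega>)" and "card ((\<lambda>w. X w t) ` \<Omega>) \<le> c"
      using card finite_space space_nonempty by (auto simp: card_gt_0_iff)
    then have "ln (card ((\<lambda>w. X w t) ` \<Omega>)) \<le> ln c"
      by simp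
    then show "cond_entropy (\<lambda>w. X w t) (\<lambda>w. (observed B (X w), U w)) \<le> ln c"
      by (rule order.trans[OF cond_entropy_le_ln_card])
  qed simp
  then show ?thesis
    by simp
qed

end


lemma sum_telescope_le:
  fixes a :: "nat \<Rightarrow> nat \<Rightarrow> real"
  assumes "\<And>i. Suc i < s \<Longrightarrow> a i (Suc i) \<le> a (Suc i) (Suc i)" and "0 < s"
  shows "(\<Sum>i<s. a i (Suc i) - a i i) \<le> a (s - 1) s - a 0 0"
  using assms
proof (induction s)
  case (Suc s)
  show ?case
  proof (cases "s = 0")
    case False
    then have "a (s - 1) s \<le> a s s"
      using Suc.prems(1)[of "s - 1"] by simp
    then show ?thesis
      using Suc False by simp
  qed simp
qed simp

lemma sum_weighted_differences_ge:
  fixes c g :: "nat \<Rightarrow> real"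
  assumes "0 < s" "0 \<le> c 0" "\<And>i. Suc i < s \<Longrightarrow> c i \<le> c (Suc i)" "\<And>i. i < s \<Longrightarrow> 0 \<le> g i"
  shows "- c (s - 1) * g s \<le> (\<Sum>i<s. c i * (g i - g (Suc i)))"
  using assms
proof (induction s)
  case (Suc s)
  show ?case
  proof (cases "s = 0")
    case True
    then show ?thesis
      using Suc.prems by (simp add: algebra_simps)
  next
    case False
    then have "- c (s - 1) * g s \<le> (\<Sum>i<s. c i * (g i - g (Suc i)))"
      using Suc by simp
    moreover have "c (s - 1) * g s \<le> c s * g s"
      using Suc.prems(3)[of "s - 1"] Suc.prems(4)[of s] False by (intro mult_right_mono) auto
    ultimately show ?thesis
      by (simp add: algebra_simps)
  qed
qed simp

lemma sum_weighted_differences_lower_bound: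
  fixes c h :: "nat \<Rightarrow> real"
  assumes "0 < s" "0 \<le> c 0" "\<And>i. Suc i < s \<Longrightarrow> c i \<le> c (Suc i)"
    and "h s = 0" and "\<And>i. i < s \<Longrightarrow> real (s - i) * a \<le> h i"
  shows "(\<Sum>i<s. c i) * a \<le> (\<Sum>i<s. c i * (h i - h (Suc i)))"
proof -
  \<comment> \<open>subtract the linear lower bound, whose consecutive differences are all \<open>a\<close>\<close>
  define g where "g i = h i - (s - i) * a" for i
  have "(\<Sum>i<s. c i * (h i - h (Suc i))) = (\<Sum>i<s. c i * (g i - g (Suc i))) + (\<Sum>i<s. c i) * a"
    unfolding g_def sum_distrib_right sum.distrib[symmetric]
    by (intro sum.cong refl) (simp add: of_nat_diff algebra_simps)
  moreover have "0 \<le> (\<Sum>i<s. c i * (g i - g (Suc i)))"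
    using sum_weighted_differences_ge[of s c g] assms by (simp add: g_def)
  ultimately show ?thesis
    by simp
qed

lemma nat_floor_powr_ge_1: "0 \<le> (x::real) \<Longrightarrow> 1 \<le> nat \<lfloor>2 powr x\<rfloor>"
  using ge_one_powr_ge_zero[of 2 x] by linarith

lemma ln_nat_floor_powr_le:
  fixes x :: real
  assumes "0 \<le> x"
  shows "ln (nat \<lfloor>2 powr x\<rfloor>) \<le> x * ln 2"
proof -
  have "0 < real (nat \<lfloor>2 powr x\<rfloor>)" and "real (nat \<lfloor>2 powr x\<rfloor>) \<le> 2 powr x"
    using nat_floor_powr_ge_1[OF assms] by linarith+
  then have "ln (nat \<lfloor>2 powr x\<rfloor>) \<le> ln (2 powr x)"
    by (subst ln_le_cancel_iff) auto
  then show ?thesis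
    by (simp add: ln_powr)
qed

lemma ln_nat_floor_powr_ge:
  fixes x :: real
  assumes "0 \<le> x"
  shows "(x - 1) * ln 2 \<le> ln (nat \<lfloor>2 powr x\<rfloor>)"
proof -
  have "1 \<le> 2 powr x"
    using assms by (intro ge_one_powr_ge_zero) auto
  moreover have "2 powr x < real_of_int \<lfloor>2 powr x\<rfloor> + 1"
    by linarith
  moreover have "1 \<le> \<lfloor>2 powr x\<rfloor>"
    using \<open>1 \<le> 2 powr x\<close> by linarith
  ultimately have "2 powr x / 2 \<le> real (nat \<lfloor>2 powr x\<rfloor>)"
    by linarith
  then have "ln (2 powr x / 2) \<le> ln (nat \<lfloor>2 powr x\<rfloor>)"
    using \<open>1 \<le> 2 powr x\<close> by (subst ln_le_cancel_iff) auto
  then show ?thesis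
    by (simp add: ln_div ln_powr algebra_simps)
qed

lemma inj_on_rotate: "inj_on (\<lambda>i. (i + j) mod D + 1) {..<(D::nat)}"
  by (rule inj_onI) (metis add_right_cancel cong_def cong_add_rcancel_nat lessThan_iff mod_less)

lemma rotate_image: "(\<lambda>i. (i + j) mod D + 1) ` {..<D} = {1..(D::nat)}"
proof -
  have "(\<lambda>i. (i + j) mod D + 1) ` {..<D} \<subseteq> {1..D}"
  proof
    fix x assume "x \<in> (\<lambda>i. (i + j) mod D + 1) ` {..<D}"
    then obtain i where "i < D" "x = (i + j) mod D + 1"
      by auto
    then show "x \<in> {1..D}"
      by (simp add: Suc_le_eq)
  qed
  moreover have "card ((\<lambda>i. (i + j) mod D + 1) ` {..<D}) = card {1..D}"
    using card_image[OF inj_on_rotate] by simp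
  ultimately show ?thesis
    by (intro card_subset_eq) auto
qed

text \<open>Every element of \<open>{1..D}\<close> lies in exactly \<open>card I\<close> of the \<open>D\<close> rotations of \<open>I\<close>.\<close>

lemma sum_rotations:
  fixes a :: "nat \<Rightarrow> real"
  assumes "I \<subseteq> {..<D}"
  shows "(\<Sum>j<D. \<Sum>x\<in>(\<lambda>i. (i + j) mod D + 1) ` I. a x) = card I * (\<Sum>x\<in>{1..D}. a x)"
proof -
  have inj: "inj_on (\<lambda>i. (i + j) mod D + 1) A" if "A \<subseteq> {..<D}" for A j
    using inj_on_subset[OF inj_on_rotate that] .
  have "(\<Sum>j<D. \<Sum>x\<in>(\<lambda>i. (i + j) mod D + 1) ` I. a x) = (\<Sum>j<D. \<Sum>i\<in>I. a ((i + j) mod D + 1))"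
    using inj[OF assms] by (simp add: sum.reindex)
  also have "\<dots> = (\<Sum>i\<in>I. \<Sum>j<D. a ((i + j) mod D + 1))"
    by (rule sum.swap)
  also have "\<dots> = (\<Sum>i\<in>I. \<Sum>x\<in>{1..D}. a x)"
  proof (rule sum.cong)
    fix i assume "i \<in> I"
    then have "(\<lambda>j. (j + i) mod D + 1) ` {..<D} = {1..D}"
      and "inj_on (\<lambda>j. (j + i) mod D + 1) {..<D}"
      using rotate_image inj by auto
    then show "(\<Sum>j<D. a ((i + j) mod D + 1)) = (\<Sum>x\<in>{1..D}. a x)"
      using sum.reindex[of "\<lambda>j. (j + i) mod D + 1" "{..<D}" a] by (simp add: add.commute)
  qed simp
  finally show ?thesis
    by simp
qed


lemma restrict_insert_eq_iff:
  "restrict f (insert d F) = restrict g (insert d F) \<longleftrightarrow> f d = g d \<and> restrict f F = restrict g F"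
  unfolding restrict_def fun_eq_iff by auto

context finite_dist
begin

definition files_entropy :: "('a \<Rightarrow> 'v) \<Rightarrow> ('a \<Rightarrow> nat \<Rightarrow> 'c) \<Rightarrow> nat set \<Rightarrow> real" where
  "files_entropy V W F = entropy (\<lambda>w. (V w, restrict (W w) F))"

lemma files_entropy_insert:
  "cond_entropy (\<lambda>w. W w d) (\<lambda>w. (V w, restrict (W w) F)) =
     files_entropy V W (insert d F) - files_entropy V W F"
proof -
  have "entropy (\<lambda>w. (W w d, V w, restrict (W w) F)) =
      entropy (\<lambda>w. (V w, restrict (W w) (insert d F)))"
    by (rule entropy_cong) (auto simp: restrict_insert_eq_iff)
  then show ?thesis
    unfolding cond_entropy_def files_entropy_def by simp
qed

lemma files_entropy_chain:
  "files_entropy V W (T \<inter> {..<N}) - files_entropy V W {} =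
     (\<Sum>x\<in>T \<inter> {..<N}. cond_entropy (\<lambda>w. W w x) (\<lambda>w. (V w, restrict (W w) (T \<inter> {..<x}))))"
proof (induction N)
  case (Suc N)
  show ?case
  proof (cases "N \<in> T")
    case True
    then have T_Suc: "T \<inter> {..<Suc N} = insert N (T \<inter> {..<N})"
      by auto
    have "files_entropy V W (T \<inter> {..<Suc N}) = files_entropy V W (T \<inter> {..<N}) +
        cond_entropy (\<lambda>w. W w N) (\<lambda>w. (V w, restrict (W w) (T \<inter> {..<N})))"
      unfolding T_Suc files_entropy_insert by simp
    moreover have "(\<Sum>x\<in>T \<inter> {..<Suc N}.
          cond_entropy (\<lambda>w. W w x) (\<lambda>w. (V w, restrict (W w) (T \<inter> {..<x})))) =
        cond_entropy (\<lambda>w. W w N) (\<lambda>w. (V w, restrict (W w) (T \<inter> {..<N}))) +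
        (\<Sum>x\<in>T \<inter> {..<N}. cond_entropy (\<lambda>w. W w x) (\<lambda>w. (V w, restrict (W w) (T \<inter> {..<x}))))"
      unfolding T_Suc by (rule sum.insert) auto
    ultimately show ?thesis
      using Suc.IH by linarith
  next
    case False
    then have "T \<inter> {..<Suc N} = T \<inter> {..<N}"
      by (auto simp: less_Suc_eq)
    then show ?thesis
      using Suc.IH by simp
  qed
qed simp

text \<open>A Han-type inequality: conditioning each file on the earlier files of all of \<open>S\<close>
  instead of only those of \<open>T\<close> can only decrease the sum of the chain rule.\<close>

lemma sum_cond_entropy_le_files_entropy:
  assumes "finite S" "T \<subseteq> S"
  shows "(\<Sum>x\<in>T. cond_entropy (\<lambda>w. W w x) (\<lambda>w. (V w, restrict (W w) (S \<inter> {..<x})))) \<le>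
    files_entropy V W T - files_entropy V W {}"
proof -
  obtain N where "S \<subseteq> {..<N}"
    using assms(1) by (auto simp: finite_nat_set_iff_bounded)
  then have "T \<inter> {..<N} = T"
    using assms(2) by auto
  then have "files_entropy V W T - files_entropy V W {} =
      (\<Sum>x\<in>T. cond_entropy (\<lambda>w. W w x) (\<lambda>w. (V w, restrict (W w) (T \<inter> {..<x}))))"
    using files_entropy_chain[of V W T N] by simp
  moreover have "cond_entropy (\<lambda>w. W w x) (\<lambda>w. (V w, restrict (W w) (S \<inter> {..<x}))) \<le>
      cond_entropy (\<lambda>w. W w x) (\<lambda>w. (V w, restrict (W w) (T \<inter> {..<x})))" for x
    using assms(2)
    by (intro cond_entropy_le_coarser[where h = "\<lambda>(v, r). (v, restrict r (T \<inter> {..<x}))"])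
      (auto simp: restrict_def fun_eq_iff)
  ultimately show ?thesis
    by (simp add: sum_mono)
qed

lemma files_entropy_eq_sum:
  assumes "finite S"
  shows "files_entropy V W S - files_entropy V W {} =
    (\<Sum>x\<in>S. cond_entropy (\<lambda>w. W w x) (\<lambda>w. (V w, restrict (W w) (S \<inter> {..<x}))))"
proof -
  obtain N where "S \<subseteq> {..<N}"
    using assms by (auto simp: finite_nat_set_iff_bounded)
  then show ?thesis
    using files_entropy_chain[of V W S N] by (simp add: Int_absorb2)
qed

end


section \<open>Caching codes for the erasure broadcast channel\<close>

lemma error_prob_ge_receiver_error:
  assumes k: "k \<in> {1..K}" and \<delta>: "\<forall>k\<in>{1..K}. 0 \<le> \<delta> k \<and> \<delta> k \<le> 1"
  shows "(\<Sum>w\<in>library D n R. 1 / card (library D n R) *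
     subset_exp (1 - \<delta> k) {..<n}
       (\<lambda>A. if w (d k) \<noteq> \<phi> k d (observed A (f d w)) (g k w) then 1 else 0))
     \<le> error_prob \<delta> K D n R g f \<phi> d"
proof -
  let ?I = "{..<n} \<times> {1..K}"
  let ?err = "\<lambda>w A. if w (d k) \<noteq> \<phi> k d (observed A (f d w)) (g k w) then 1 else 0 :: real"
  have channel_output_eq:
    "channel_output n (f d w) e k = observed {t. (t, k) \<in> ?I \<and> \<not> e (t, k)} (f d w)" for w e
    unfolding channel_output_def observed_def using k by (auto simp: fun_eq_iff)
  have "{t. (t, k) \<in> ?I} = {..<n}"
    using k by auto
  then have receiver_error: "(\<Sum>e\<in>erasure_patterns K n. pattern_prob \<delta> K n e *
        (if \<phi> k d (channel_output n (f d w) e k) (g k w) \<noteq> w (d k) then 1 else 0)) =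
      subset_exp (1 - \<delta> k) {..<n} (?err w)" for w
    using sum_erasure_patterns_eq_subset_exp[of ?I k "\<lambda>i. \<delta> (snd i)" "\<delta> k" "?err w"]
    unfolding erasure_patterns_def pattern_prob_def channel_output_eq
    by (simp add: eq_commute[of "w (d k)"])
  have "(\<Sum>w\<in>library D n R. 1 / card (library D n R) * subset_exp (1 - \<delta> k) {..<n} (?err w)) =
      1 / card (library D n R) * (\<Sum>w\<in>library D n R. \<Sum>e\<in>erasure_patterns K n. pattern_prob \<delta> K n e *
        (if \<phi> k d (channel_output n (f d w) e k) (g k w) \<noteq> w (d k) then 1 else 0))"
    unfolding receiver_error sum_distrib_left ..
  also have "\<dots> \<le> 1 / card (library D n R) * (\<Sum>w\<in>library D n R. \<Sum>e\<in>erasure_patterns K n.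
      pattern_prob \<delta> K n e *
        (if \<exists>k\<in>{1..K}. \<phi> k d (channel_output n (f d w) e k) (g k w) \<noteq> w (d k) then 1 else 0))"
    using k \<delta> unfolding pattern_prob_def
    by (intro mult_left_mono sum_mono mult_left_mono prod_nonneg) auto
  finally show ?thesis
    unfolding error_prob_def .
qed

locale good_code =
  fixes F K D n :: nat and R :: real and \<delta> M :: "nat \<Rightarrow> real"
    and g :: "nat \<Rightarrow> (nat \<Rightarrow> nat) \<Rightarrow> nat"
    and f :: "(nat \<Rightarrow> nat) \<Rightarrow> (nat \<Rightarrow> nat) \<Rightarrow> nat \<Rightarrow> bool list"
    and \<phi> :: "nat \<Rightarrow> (nat \<Rightarrow> nat) \<Rightarrow> (nat \<Rightarrow> bool list option) \<Rightarrow> nat \<Rightarrow> nat"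
    and S :: "nat set" and \<epsilon> :: real
  assumes S_subset: "S \<subseteq> {1..K}" and S_nonempty: "S \<noteq> {}" and K_le_D: "K \<le> D"
    and \<delta>_bounds: "\<forall>k\<in>{1..K}. 0 \<le> \<delta> k \<and> \<delta> k < 1"
    and M_nonneg: "\<forall>k\<in>{1..K}. 0 \<le> M k"
    and msg_count_pos: "1 \<le> msg_count n R"
    and valid: "valid_code F K D M n R g f"
    and error_lt: "\<forall>d\<in>demands K D. error_prob \<delta> K D n R g f \<phi> d < \<epsilon>"
begin

definition "L = library D n R"
definition "m = msg_count n R"
definition unif :: "(nat \<Rightarrow> nat) \<Rightarrow> real" where "unif w = 1 / card L"

text \<open>The receivers of \<open>S\<close> in order of increasing erasure probability; in demand vector \<open>j\<close>
  the \<open>i\<close>-th of them asks for file \<open>(i + j) mod D + 1\<close>, so that over the \<open>D\<close> rotations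
  every file is requested equally often by every position.\<close>

definition "users = sort_key \<delta> (sorted_list_of_set S)"
definition "s = length users"
definition "user i = users ! i"
definition "rank k = (THE i. i < s \<and> users ! i = k)"
definition "cyclic_demand j = restrict (\<lambda>k. if k \<in> S then (rank k + j) mod D + 1 else 1) {1..K}"
definition "later_files j i = (\<lambda>i'. (i' + j) mod D + 1) ` {i..<s}"

definition "caches w = restrict (\<lambda>k. g k w) S"

text \<open>Receiver \<open>user i\<close> is analysed with the side information \<open>known j (Suc i)\<close>: the caches of
  all of \<open>S\<close> and the files requested by the receivers after it.\<close>

definition "known j i w = (caches w, restrict w (later_files j i))"
definition "q i = 1 - \<delta> (user i)"
definition "c i = 1 / q i"
definition "erased_chain j i x =
  finite_dist.chain_entropy L unif (f (cyclic_demand j)) n (q i) (known j x)"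

lemma finite_S: "finite S"
  using S_subset finite_subset by blast

lemma set_users: "set users = S" and distinct_users: "distinct users"
  unfolding users_def using finite_S by simp_all

lemma s_eq_card: "s = card S"
  unfolding s_def using distinct_card[OF distinct_users] set_users by simp

lemma s_pos: "0 < s"
  using s_eq_card finite_S S_nonempty by (simp add: card_gt_0_iff)

lemma s_le_D: "s \<le> D"
  using s_eq_card S_subset card_mono[of "{1..K}" S] K_le_D by simp

lemma user_in_S: "i < s \<Longrightarrow> user i \<in> S"
  unfolding user_def s_def using set_users nth_mem by blast

lemma user_in_receivers: "i < s \<Longrightarrow> user i \<in> {1..K}"
  using user_in_S S_subset by blast

lemma erasure_prob_user_mono: "i \<le> i' \<Longrightarrow> i' < s \<Longrightarrow> \<delta> (user i) \<le> \<delta> (user i')"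
  using sorted_nth_mono[of "map \<delta> users" i i'] unfolding users_def user_def s_def by simp

lemma cyclic_demand_user: "i < s \<Longrightarrow> cyclic_demand j (user i) = (i + j) mod D + 1"
proof -
  assume i: "i < s"
  have "rank (user i) = i"
    unfolding rank_def user_def
    by (rule the_equality) (use i distinct_users in \<open>auto simp: s_def nth_eq_iff_index_eq\<close>)
  then show ?thesis
    unfolding cyclic_demand_def using user_in_S[OF i] user_in_receivers[OF i] by simp
qed

lemma cyclic_demand_in_demands: "cyclic_demand j \<in> demands K D"
  unfolding demands_def cyclic_demand_def using s_pos s_le_D by (auto simp: PiE_iff Suc_le_eq)

lemma later_files_Suc:
  "i < s \<Longrightarrow> later_files j i = insert ((i + j) mod D + 1) (later_files j (Suc i))"
proof -
  assume "i < s"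
  then have "{i..<s} = insert i {Suc i..<s}"
    by auto
  then show ?thesis
    unfolding later_files_def by simp
qed

lemma later_files_end: "later_files j s = {}"
  unfolding later_files_def by simp

lemma later_files_subset: "later_files j i \<subseteq> {1..D}"
  unfolding later_files_def using s_pos s_le_D by (auto simp: Suc_le_eq)

lemma finite_L: "finite L"
  unfolding L_def library_def by (simp add: finite_PiE)

lemma card_L: "card L = m ^ D"
  unfolding L_def library_def m_def by (simp add: card_PiE)

sublocale finite_dist L unif
proof
  show "sum unif L = 1"
    unfolding unif_def using card_L msg_count_pos finite_L by (simp add: m_def)
qed (auto simp: finite_L unif_def)

lemma q_pos: "i < s \<Longrightarrow> 0 < q i" and q_le_1: "i < s \<Longrightarrow> q i \<le> 1"
  unfolding q_def using \<delta>_bounds user_in_receivers by force+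

lemma c_pos: "i < s \<Longrightarrow> 0 < c i"
  unfolding c_def using q_pos by simp

lemma c_mono: "Suc i < s \<Longrightarrow> c i \<le> c (Suc i)"
  using q_pos[of "Suc i"] erasure_prob_user_mono[of i "Suc i"] unfolding c_def q_def
  by (simp add: frac_le)

lemma sum_c: "(\<Sum>i<s. c i) = (\<Sum>k\<in>S. 1 / (1 - \<delta> k))"
proof -
  have "inj_on (nth users) {..<s}" and "nth users ` {..<s} = S"
    using distinct_users set_users by (auto simp: s_def inj_on_nth set_conv_nth)
  then show ?thesis
    unfolding c_def q_def user_def using sum.reindex[of "nth users" "{..<s}" "\<lambda>k. 1 / (1 - \<delta> k)"]
    by simp
qed

lemma card_file_values: "d \<in> {1..D} \<Longrightarrow> card ((\<lambda>w. w d) ` L) \<le> m"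
proof -
  assume "d \<in> {1..D}"
  then have "(\<lambda>w. w d) ` L \<subseteq> {1..m}"
    unfolding L_def library_def m_def by (auto simp: PiE_iff)
  then show ?thesis
    using card_mono[of "{1..m}"] by fastforce
qed

lemma card_symbol_values: "d \<in> demands K D \<Longrightarrow> t < n \<Longrightarrow> card ((\<lambda>w. f d w t) ` L) \<le> 2 ^ F"
proof -
  assume "d \<in> demands K D" "t < n"
  then have "(\<lambda>w. f d w t) ` L \<subseteq> {xs. set xs \<subseteq> (UNIV :: bool set) \<and> length xs = F}"
    using valid unfolding valid_code_def L_def by auto
  moreover have "finite {xs. set xs \<subseteq> (UNIV :: bool set) \<and> length xs = F}"
    by (rule finite_lists_length_eq) simp
  ultimately show ?thesis
    using card_lists_length_eq[of "UNIV :: bool set" F] card_mono by fastforce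
qed

end


context good_code
begin

abbreviation "H \<equiv> files_entropy caches (\<lambda>w. w)"

lemma decoding_error_bound:
  fixes i j :: nat
  assumes i: "i < s"
  defines "k \<equiv> user i" and "d \<equiv> cyclic_demand j"
  shows "(\<Sum>w\<in>L. unif w * subset_exp (q i) {..<n}
      (\<lambda>A. if w (d k) \<noteq> \<phi> k d (observed A (f d w)) (g k w) then 1 else 0)) *
    ln (card ((\<lambda>w. w (d k)) ` L)) \<le> \<epsilon> * ln m"
proof -
  define P where "P = (\<Sum>w\<in>L. unif w * subset_exp (q i) {..<n}
      (\<lambda>A. if w (d k) \<noteq> \<phi> k d (observed A (f d w)) (g k w) then 1 else 0))"
  have "P \<le> error_prob \<delta> K D n R g f \<phi> d"
    unfolding P_def unif_def L_def q_def k_def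
    using \<delta>_bounds user_in_receivers[OF i] by (intro error_prob_ge_receiver_error) auto
  also have "\<dots> < \<epsilon>"
    using error_lt cyclic_demand_in_demands unfolding d_def by blast
  finally have "P < \<epsilon>" .
  moreover have "0 \<le> P"
    unfolding P_def unif_def using q_pos[OF i] q_le_1[OF i]
    by (intro sum_nonneg mult_nonneg_nonneg subset_exp_nonneg) auto
  moreover have "0 < card ((\<lambda>w. w (d k)) ` L)"
    using finite_L space_nonempty by (simp add: card_gt_0_iff)
  moreover have "card ((\<lambda>w. w (d k)) ` L) \<le> m"
    unfolding d_def k_def cyclic_demand_user[OF i]
    using s_pos s_le_D by (intro card_file_values) (auto simp: Suc_le_eq)
  ultimately have "0 \<le> ln (card ((\<lambda>w. w (d k)) ` L))" and "ln (card ((\<lambda>w. w (d k)) ` L)) \<le> ln m"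
    and "0 \<le> \<epsilon>" and "P \<le> \<epsilon>"
    by auto
  then have "P * ln (card ((\<lambda>w. w (d k)) ` L)) \<le> \<epsilon> * ln m"
    by (meson mult_mono)
  then show ?thesis
    unfolding P_def .
qed

lemma user_step:
  assumes j: "j < D" and i: "i < s"
  shows "c i * (H (later_files j i) - H (later_files j (Suc i))) \<le>
    erased_chain j i (Suc i) - erased_chain j i i + c i * (ln 2 + \<epsilon> * ln m)"
proof -
  define k where "k = user i"
  define d where "d = cyclic_demand j"
  define e where "e = (i + j) mod D + 1"
  have d_k: "d k = e"
    unfolding d_def k_def e_def using cyclic_demand_user[OF i] .
  have later: "later_files j i = insert e (later_files j (Suc i))"
    unfolding e_def using later_files_Suc[OF i] .
  interpret erasure_model L unif "{..<n}" "q i"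
    using finite_dist_subsets[of "{..<n}" "q i"] q_pos[OF i] q_le_1[OF i]
    by (intro erasure_model.intro finite_dist_pair.intro) (auto intro: finite_dist_axioms)
  have "cond_entropy (\<lambda>w. w e) (known j (Suc i)) \<le>
     subset_exp (q i) {..<n} (\<lambda>A. cond_entropy (\<lambda>w. observed A (f d w)) (known j (Suc i))) -
     subset_exp (q i) {..<n} (\<lambda>A. cond_entropy (\<lambda>w. observed A (f d w)) (known j i)) + ln 2 +
     (\<Sum>w\<in>L. unif w * subset_exp (q i) {..<n}
       (\<lambda>A. if w e \<noteq> \<phi> k d (observed A (f d w)) (fst (known j (Suc i) w) k) then 1 else 0)) *
     ln (card ((\<lambda>w. w e) ` L))"
    unfolding known_def later
    by (rule erasure_fano) (auto simp only: restrict_insert_eq_iff prod.inject)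
  moreover have "cond_entropy (\<lambda>w. w e) (known j (Suc i)) =
      H (later_files j i) - H (later_files j (Suc i))"
    unfolding later known_def by (rule files_entropy_insert)
  moreover have "subset_exp (q i) {..<n} (\<lambda>A. cond_entropy (\<lambda>w. observed A (f d w)) (known j x)) =
      q i * erased_chain j i x" for x
    unfolding erased_chain_def d_def by (rule subset_exp_observed_eq_chain_entropy)
  moreover have "fst (known j (Suc i) w) k = g k w" for w
    unfolding known_def caches_def k_def using user_in_S[OF i] by simp
  moreover note decoding_error_bound[OF i, of j, folded k_def d_def, unfolded d_k]
  ultimately have "H (later_files j i) - H (later_files j (Suc i)) \<le>
      q i * (erased_chain j i (Suc i) - erased_chain j i i) + (ln 2 + \<epsilon> * ln m)"
    by (simp add: algebra_simps)
  then have "c i * (H (later_files j i) - H (later_files j (Suc i))) \<le>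
      c i * (q i * (erased_chain j i (Suc i) - erased_chain j i i) + (ln 2 + \<epsilon> * ln m))"
    using c_pos[OF i] by (intro mult_left_mono) auto
  then show ?thesis
    using q_pos[OF i] unfolding c_def by (simp add: algebra_simps)
qed

lemma rotation_bound:
  assumes j: "j < D"
  shows "(\<Sum>i<s. c i * (H (later_files j i) - H (later_files j (Suc i)))) \<le>
    n * (F * ln 2) + (\<Sum>i<s. c i) * (ln 2 + \<epsilon> * ln m)"
proof -
  have "(\<Sum>i<s. c i * (H (later_files j i) - H (later_files j (Suc i)))) \<le>
      (\<Sum>i<s. erased_chain j i (Suc i) - erased_chain j i i + c i * (ln 2 + \<epsilon> * ln m))"
    using user_step[OF j] by (intro sum_mono) auto
  also have "\<dots> = (\<Sum>i<s. erased_chain j i (Suc i) - erased_chain j i i) +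
      (\<Sum>i<s. c i) * (ln 2 + \<epsilon> * ln m)"
    by (simp add: sum.distrib sum_distrib_right)
  finally have "(\<Sum>i<s. c i * (H (later_files j i) - H (later_files j (Suc i)))) \<le>
      (\<Sum>i<s. erased_chain j i (Suc i) - erased_chain j i i) + (\<Sum>i<s. c i) * (ln 2 + \<epsilon> * ln m)" .
  \<comment> \<open>the users are ordered so that \<open>q\<close> decreases, and \<open>chain_entropy\<close> is antitone in \<open>q\<close>\<close>
  moreover have "(\<Sum>i<s. erased_chain j i (Suc i) - erased_chain j i i) \<le>
      erased_chain j (s - 1) s - erased_chain j 0 0"
  proof (rule sum_telescope_le[OF _ s_pos])
    fix i assume i: "Suc i < s"
    then have "q (Suc i) \<le> q i"
      unfolding q_def using erasure_prob_user_mono[of i "Suc i"] by simp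
    then show "erased_chain j i (Suc i) \<le> erased_chain j (Suc i) (Suc i)"
      unfolding erased_chain_def using q_pos[of "Suc i"] q_le_1[of i] i
      by (intro chain_entropy_antimono_prob) auto
  qed
  moreover have "erased_chain j (s - 1) s \<le> n * ln (real (2 ^ F))"
    unfolding erased_chain_def using s_pos q_pos[of "s - 1"] q_le_1[of "s - 1"]
    by (intro chain_entropy_le card_symbol_values[OF cyclic_demand_in_demands]) auto
  moreover have "0 \<le> erased_chain j 0 0"
    unfolding erased_chain_def using s_pos q_pos[of 0] q_le_1[of 0]
    by (intro chain_entropy_nonneg) auto
  ultimately show ?thesis
    by (simp add: ln_realpow)
qed

lemma sum_rotations_lower_bound:
  assumes "i < s"
  shows "real (s - i) * (H {1..D} - H {}) \<le> (\<Sum>j<D. H (later_files j i) - H {})"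
proof -
  define a where "a x = cond_entropy (\<lambda>w. w x) (\<lambda>w. (caches w, restrict w ({1..D} \<inter> {..<x})))" for x
  have "real (s - i) * (H {1..D} - H {}) = (\<Sum>j<D. \<Sum>x\<in>later_files j i. a x)"
    unfolding later_files_def a_def files_entropy_eq_sum[OF finite_atLeastAtMost]
    using s_le_D by (subst sum_rotations) auto
  also have "\<dots> \<le> (\<Sum>j<D. H (later_files j i) - H {})"
    unfolding a_def using later_files_subset
    by (intro sum_mono sum_cond_entropy_le_files_entropy) auto
  finally show ?thesis .
qed

end


context good_code
begin

lemma files_entropy_library: "H {1..D} = D * ln m"
proof -
  have "H {1..D} = ln (card L)"
    unfolding files_entropy_def
  proof (rule entropy_uniform_inj)
    show "inj_on (\<lambda>w. (caches w, restrict w {1..D})) L"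
      unfolding inj_on_def L_def library_def by auto
  qed (simp add: unif_def)
  then show ?thesis
    unfolding card_L by (simp add: ln_realpow)
qed

lemma files_entropy_caches: "H {} \<le> n * (\<Sum>k\<in>S. M k) * ln 2"
proof -
  define N where "N k = nat \<lfloor>2 powr (n * M k)\<rfloor>" for k
  have M: "k \<in> S \<Longrightarrow> 0 \<le> n * M k" for k
    using M_nonneg S_subset by auto
  have "(\<lambda>w. (caches w, restrict w {})) ` L = (\<lambda>v. (v, \<lambda>_. undefined)) ` caches ` L"
    by (auto simp: restrict_def image_iff)
  then have "card ((\<lambda>w. (caches w, restrict w {})) ` L) \<le> card (caches ` L)"
    using card_image_le[OF finite_imageI[OF finite_L]] by simp
  also have "\<dots> \<le> card (PiE S (\<lambda>k. {1..N k}))"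
    using valid S_subset finite_S unfolding valid_code_def caches_def L_def N_def
    by (intro card_mono) (auto simp: finite_PiE PiE_iff subset_iff)
  also have "\<dots> = (\<Prod>k\<in>S. N k)"
    using finite_S by (simp add: card_PiE)
  finally have "card ((\<lambda>w. (caches w, restrict w {})) ` L) \<le> (\<Prod>k\<in>S. N k)" .
  moreover have "0 < card ((\<lambda>w. (caches w, restrict w {})) ` L)"
    using finite_L space_nonempty by (simp add: card_gt_0_iff)
  ultimately have "ln (card ((\<lambda>w. (caches w, restrict w {})) ` L)) \<le> ln (real (\<Prod>k\<in>S. N k))"
    by (simp del: of_nat_prod)
  also have "\<dots> = (\<Sum>k\<in>S. ln (N k))"
    using finite_S M nat_floor_powr_ge_1 unfolding N_def of_nat_prod by (subst ln_prod) force+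
  also have "\<dots> \<le> (\<Sum>k\<in>S. n * M k * ln 2)"
    using M ln_nat_floor_powr_le unfolding N_def by (intro sum_mono) auto
  finally show ?thesis
    using entropy_le_ln_card[of "\<lambda>w. (caches w, restrict w {})"]
    unfolding files_entropy_def by (simp add: sum_distrib_left sum_distrib_right)
qed

lemma entropy_balance:
  "(\<Sum>i<s. c i) * (D * ln m - n * (\<Sum>k\<in>S. M k) * ln 2) \<le>
    D * (n * (F * ln 2) + (\<Sum>i<s. c i) * (ln 2 + \<epsilon> * ln m))"
proof -
  define G where "G i = (\<Sum>j<D. H (later_files j i) - H {})" for i
  have "(\<Sum>i<s. c i * (G i - G (Suc i))) =
      (\<Sum>j<D. \<Sum>i<s. c i * (H (later_files j i) - H (later_files j (Suc i))))"
    unfolding G_def sum_subtractf[symmetric] sum_distrib_left by (simp add: sum.swap[of _ "{..<D}"])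
  also have "\<dots> \<le> (\<Sum>j<D. n * (F * ln 2) + (\<Sum>i<s. c i) * (ln 2 + \<epsilon> * ln m))"
    by (intro sum_mono rotation_bound) simp
  finally have upper: "(\<Sum>i<s. c i * (G i - G (Suc i))) \<le>
      D * (n * (F * ln 2) + (\<Sum>i<s. c i) * (ln 2 + \<epsilon> * ln m))"
    by simp
  have "(\<Sum>i<s. c i) * (H {1..D} - H {}) \<le> (\<Sum>i<s. c i * (G i - G (Suc i)))"
  proof (rule sum_weighted_differences_lower_bound)
    show "0 \<le> c 0"
      using c_pos s_pos by (simp add: less_imp_le)
    show "G s = 0"
      unfolding G_def later_files_end by simp
    show "real (s - i) * (H {1..D} - H {}) \<le> G i" if "i < s" for i
      unfolding G_def by (rule sum_rotations_lower_bound[OF that])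
  qed (use s_pos c_mono in auto)
  moreover have "(\<Sum>i<s. c i) * (D * ln m - n * (\<Sum>k\<in>S. M k) * ln 2) \<le>
      (\<Sum>i<s. c i) * (H {1..D} - H {})"
    using files_entropy_library files_entropy_caches c_pos
    by (intro mult_left_mono sum_nonneg) (auto intro: less_imp_le)
  ultimately show ?thesis
    using upper by linarith
qed

lemma ln_msg_count_bound:
  "(1 - \<epsilon>) * ln m \<le> ln 2 * (n * (F / (\<Sum>k\<in>S. 1 / (1 - \<delta> k)) + (\<Sum>k\<in>S. M k) / D) + 1)"
proof -
  define C where "C = (\<Sum>k\<in>S. 1 / (1 - \<delta> k))"
  define MS where "MS = (\<Sum>k\<in>S. M k)"
  have C_pos: "0 < C"
    unfolding C_def sum_c[symmetric] using c_pos s_pos by (intro sum_pos) auto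
  have D_pos: "0 < real D"
    using s_pos s_le_D by simp
  have "C * D * (ln 2 * (n * (F / C + MS / D) + 1)) = ln 2 * (D * n * F + C * n * MS + C * D)"
    using C_pos D_pos by (simp add: field_simps)
  moreover have "C * D * ((1 - \<epsilon>) * ln m) \<le> ln 2 * (D * n * F + C * n * MS + C * D)"
    using entropy_balance unfolding sum_c C_def[symmetric] MS_def[symmetric]
    by (simp add: algebra_simps)
  ultimately have "C * D * ((1 - \<epsilon>) * ln m) \<le> C * D * (ln 2 * (n * (F / C + MS / D) + 1))"
    by linarith
  then show ?thesis
    using C_pos D_pos unfolding C_def MS_def by (simp add: mult_le_cancel_left_pos)
qed


lemma rate_bound:
  assumes "0 \<le> R" and "\<epsilon> < 1"
  shows "(1 - \<epsilon>) * (n * R - 1) \<le> n * (F / (\<Sum>k\<in>S. 1 / (1 - \<delta> k)) + (\<Sum>k\<in>S. M k) / D) + 1"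
proof -
  have "(1 - \<epsilon>) * ((n * R - 1) * ln 2) \<le> (1 - \<epsilon>) * ln m"
    using ln_nat_floor_powr_ge[of "n * R"] assms unfolding m_def msg_count_def
    by (intro mult_left_mono) auto
  also have "\<dots> \<le> ln 2 * (n * (F / (\<Sum>k\<in>S. 1 / (1 - \<delta> k)) + (\<Sum>k\<in>S. M k) / D) + 1)"
    by (rule ln_msg_count_bound)
  finally show ?thesis
    by (simp add: mult.commute[of "ln 2"] mult.left_commute[of "ln 2"])
qed
end


lemma le_of_asymptotic_bound:
  fixes R B :: real
  assumes "0 \<le> B"
    and bound: "\<And>\<epsilon> (N::nat). 0 < \<epsilon> \<Longrightarrow> \<epsilon> < 1 \<Longrightarrow> \<exists>n\<ge>N. (1 - \<epsilon>) * (real n * R - 1) \<le> real n * B + 1"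
  shows "R \<le> B"
proof (rule ccontr)
  assume "\<not> R \<le> B"
  then have "B < R" and "0 < R"
    using assms(1) by auto
  define \<epsilon> where "\<epsilon> = (R - B) / (2 * R)"
  have "0 < \<epsilon>" and "\<epsilon> < 1"
    unfolding \<epsilon>_def using \<open>B < R\<close> \<open>0 < R\<close> assms(1) by (auto simp: field_simps)
  then obtain n where n: "n \<ge> nat \<lceil>4 / (R - B)\<rceil> + 1"
    and "(1 - \<epsilon>) * (real n * R - 1) \<le> real n * B + 1"
    using bound by blast
  moreover have "(1 - \<epsilon>) * (n * R - 1) = n * R / 2 + n * B / 2 - (1 - \<epsilon>)"
    unfolding \<epsilon>_def using \<open>0 < R\<close> by (simp add: field_simps)
  ultimately have "n * (R - B) \<le> 4"
    using \<open>0 < \<epsilon>\<close> by (simp add: algebra_simps)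
  then have "n \<le> 4 / (R - B)"
    using \<open>B < R\<close> by (simp add: field_simps)
  with n show False
    by linarith
qed

lemma achievable_le:
  assumes "D \<ge> K" and "\<forall>k\<in>{1..K}. 0 \<le> \<delta> k \<and> \<delta> k < 1" and "\<forall>k\<in>{1..K}. 0 \<le> M k"
    and "S \<subseteq> {1..K}" "S \<noteq> {}" and "achievable F \<delta> K D M R"
  shows "R \<le> F / (\<Sum>k\<in>S. 1 / (1 - \<delta> k)) + (\<Sum>k\<in>S. M k) / D"
proof -
  define B where "B = F / (\<Sum>k\<in>S. 1 / (1 - \<delta> k)) + (\<Sum>k\<in>S. M k) / D"
  have "0 \<le> 1 / (1 - \<delta> k)" and "0 \<le> M k" if "k \<in> S" for k
  proof -
    have "\<delta> k < 1" and "0 \<le> M k"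
      using assms(2-4) that by auto
    then show "0 \<le> 1 / (1 - \<delta> k)" and "0 \<le> M k"
      by simp_all
  qed
  then have "0 \<le> B"
    unfolding B_def by (intro add_nonneg_nonneg divide_nonneg_nonneg sum_nonneg) auto
  show ?thesis
  proof (cases "R \<le> 0")
    case False
    show ?thesis
      unfolding B_def[symmetric]
    proof (rule le_of_asymptotic_bound[OF \<open>0 \<le> B\<close>])
      fix \<epsilon> :: real and N :: nat
      assume "0 < \<epsilon>" "\<epsilon> < 1"
      then obtain n g f \<phi> where "n \<ge> N" and code: "valid_code F K D M n R g f"
        "\<forall>d\<in>demands K D. error_prob \<delta> K D n R g f \<phi> d < \<epsilon>"
        using assms(6) unfolding achievable_def by blast
      have "0 \<le> n * R"
        using False by simp
      then interpret good_code F K D n R \<delta> M g f \<phi> S \<epsilon>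
        using assms code nat_floor_powr_ge_1[OF \<open>0 \<le> n * R\<close>]
        by unfold_locales (auto simp: msg_count_def)
      show "\<exists>n\<ge>N. (1 - \<epsilon>) * (real n * R - 1) \<le> real n * B + 1"
        using rate_bound False \<open>\<epsilon> < 1\<close> \<open>n \<ge> N\<close> unfolding B_def by auto
    qed
  qed (use \<open>0 \<le> B\<close> B_def in simp)
qed

lemma achievable_zero:
  assumes "\<forall>k\<in>{1..K}. 0 \<le> M k"
  shows "achievable F \<delta> K D M 0"
  unfolding achievable_def
proof (intro allI impI)
  fix \<epsilon> :: real and N :: nat
  assume "0 < \<epsilon>"
  define g :: "nat \<Rightarrow> (nat \<Rightarrow> nat) \<Rightarrow> nat" where "g k w = 1" for k w
  define f :: "(nat \<Rightarrow> nat) \<Rightarrow> (nat \<Rightarrow> nat) \<Rightarrow> nat \<Rightarrow> bool list"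
    where "f d w t = replicate F False" for d w t
  define \<phi> :: "nat \<Rightarrow> (nat \<Rightarrow> nat) \<Rightarrow> (nat \<Rightarrow> bool list option) \<Rightarrow> nat \<Rightarrow> nat"
    where "\<phi> k d y v = 1" for k d y v
  have "valid_code F K D M N 0 g f"
    unfolding valid_code_def g_def f_def
    using assms nat_floor_powr_ge_1 by auto
  moreover have "error_prob \<delta> K D N 0 g f \<phi> d = 0" if "d \<in> demands K D" for d
  proof -
    have "\<forall>w\<in>library D N 0. \<forall>k\<in>{1..K}. w (d k) = 1"
      using \<open>d \<in> demands K D\<close> unfolding library_def demands_def msg_count_def
      by (auto simp: PiE_iff)
    then have "(\<Sum>w\<in>library D N 0. \<Sum>e\<in>erasure_patterns K N. pattern_prob \<delta> K N e *
        (if \<exists>k\<in>{1..K}. \<phi> k d (channel_output N (f d w) e k) (g k w) \<noteq> w (d k) then 1 else 0)) = 0"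
      unfolding \<phi>_def by (intro sum.neutral ballI) auto
    then show ?thesis
      unfolding error_prob_def by simp
  qed
  ultimately have "valid_code F K D M N 0 g f \<and> (\<forall>d\<in>demands K D. error_prob \<delta> K D N 0 g f \<phi> d < \<epsilon>)"
    using \<open>0 < \<epsilon>\<close> by simp
  then show "\<exists>n\<ge>N. \<exists>g f \<phi>. valid_code F K D M n 0 g f \<and>
      (\<forall>d\<in>demands K D. error_prob \<delta> K D n 0 g f \<phi> d < \<epsilon>)"
    by blast
qed

theorem corollary5:
  fixes K F D :: nat and \<delta> M :: "nat \<Rightarrow> real"
  assumes "K \<ge> 1" and "F \<ge> 1" and "D \<ge> K"
    and "\<forall>k\<in>{1..K}. 0 \<le> \<delta> k \<and> \<delta> k < 1"
    and "\<forall>k\<in>{1..K}. 0 \<le> M k"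
  shows "capacity F \<delta> K D M \<le>
    Min ((\<lambda>S. real F / (\<Sum>k\<in>S. 1 / (1 - \<delta> k)) + (\<Sum>k\<in>S. M k) / real D)
         ` {S. S \<subseteq> {1..K} \<and> S \<noteq> {}})"
proof -
  have "finite {S. S \<subseteq> {1..K} \<and> S \<noteq> {}}" and "{S. S \<subseteq> {1..K} \<and> S \<noteq> {}} \<noteq> {}"
    using assms(1) by auto
  moreover have "capacity F \<delta> K D M \<le> real F / (\<Sum>k\<in>S. 1 / (1 - \<delta> k)) + (\<Sum>k\<in>S. M k) / real D"
    if "S \<subseteq> {1..K}" "S \<noteq> {}" for S
    unfolding capacity_def
    using achievable_zero[OF assms(5)] achievable_le[OF assms(3-5) that]
    by (intro cSup_least) auto
  ultimately show ?thesis
    by (simp add: Min_ge_iff)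
qed

end
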